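(* A family $\{\Theta_n\}_{n\ge0}$ of lattice congruences ($\Theta_n$ on the weak order $S_n$) is translational if and only if it has the form $\{\mathrm{Tr}(C)_n\}_{n\ge0}$ for some set $C$ of untranslated join-irreducible permutations of various sizes.
   Context: $S_n$: permutations of $[n]$ in one-line notation with the right weak order (inclusion of sets of inverted value pairs), a lattice. Join-irreducibles are the permutations with exactly one descent; $\gamma_*$ is the unique element covered by $\gamma$, and a congruence contracts $\gamma$ if $\gamma\equiv\gamma_*$. For $u\in S_p,v\in S_q$, $u\times v=u_1\cdots u_p(p+v_1)\cdots(p+v_q)\in S_{p+q}$; $1_k$ is the identity of $S_k$. $x\in S_n$ is a translate of $y\in S_k$ if $x=1_p\times y\times1_q$ for some $p,q\ge0$; $x$ is untranslated if $x_1>1$ and $x_n<n$. The family is translational if for all $p,q\ge0$, $u,u'\in S_p$, $v,v'\in S_q$: $u\times v\equiv u'\times v'$ mod $\Theta_{p+q}$ iff $u\equiv u'$ mod $\Theta_p$ and $v\equiv v'$ mod $\Theta_q$. For a set $C$ of untranslated join-irreducibles, $\mathrm{Tr}(C)_n$ is the smallest congruence on $S_n$ contracting every join-irreducible of $S_n$ that is a translate of some element of $C$. *)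

theory Defs
  imports Main
begin

definition perms :: "nat \<Rightarrow> nat list set" where
  "perms n = {w. length w = n \<and> distinct w \<and> set w = {1..n}}"

definition inv_set :: "nat list \<Rightarrow> (nat \<times> nat) set" where
  "inv_set w = {(a, b). a < b \<and> (\<exists>i j. i < j \<and> j < length w \<and> w ! i = b \<and> w ! j = a)}"

definition weak_le :: "nat list \<Rightarrow> nat list \<Rightarrow> bool" where
  "weak_le u v \<longleftrightarrow> inv_set u \<subseteq> inv_set v"

definition weak_less :: "nat list \<Rightarrow> nat list \<Rightarrow> bool" where
  "weak_less u v \<longleftrightarrow> weak_le u v \<and> u \<noteq> v"

definition is_join :: "nat \<Rightarrow> nat list \<Rightarrow> nat list \<Rightarrow> nat list \<Rightarrow> bool" where
  "is_join n x y z \<longleftrightarrow> z \<in> perms n \<and> weak_le x z \<and> weak_le y z \<and>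
     (\<forall>w\<in>perms n. weak_le x w \<and> weak_le y w \<longrightarrow> weak_le z w)"

definition is_meet :: "nat \<Rightarrow> nat list \<Rightarrow> nat list \<Rightarrow> nat list \<Rightarrow> bool" where
  "is_meet n x y z \<longleftrightarrow> z \<in> perms n \<and> weak_le z x \<and> weak_le z y \<and>
     (\<forall>w\<in>perms n. weak_le w x \<and> weak_le w y \<longrightarrow> weak_le w z)"

definition wjoin :: "nat \<Rightarrow> nat list \<Rightarrow> nat list \<Rightarrow> nat list" where
  "wjoin n x y = (THE z. is_join n x y z)"

definition wmeet :: "nat \<Rightarrow> nat list \<Rightarrow> nat list \<Rightarrow> nat list" where
  "wmeet n x y = (THE z. is_meet n x y z)"

definition lattice_cong :: "nat \<Rightarrow> (nat list \<times> nat list) set \<Rightarrow> bool" where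
  "lattice_cong n \<Theta> \<longleftrightarrow> equiv (perms n) \<Theta> \<and>
     (\<forall>x\<in>perms n. \<forall>y\<in>perms n. \<forall>z\<in>perms n. (x, y) \<in> \<Theta> \<longrightarrow>
        (wjoin n x z, wjoin n y z) \<in> \<Theta> \<and> (wmeet n x z, wmeet n y z) \<in> \<Theta>)"

definition covers :: "nat list \<Rightarrow> nat list \<Rightarrow> bool" where
  "covers x y \<longleftrightarrow> weak_less x y \<and>
     \<not> (\<exists>z\<in>perms (length y). weak_less x z \<and> weak_less z y)"

definition join_irreducible :: "nat list \<Rightarrow> bool" where
  "join_irreducible g \<longleftrightarrow> g \<in> perms (length g) \<and>
     (\<exists>!x. x \<in> perms (length g) \<and> covers x g)"

definition lower_cover :: "nat list \<Rightarrow> nat list" where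
  "lower_cover g = (THE x. x \<in> perms (length g) \<and> covers x g)"

definition contracts :: "(nat list \<times> nat list) set \<Rightarrow> nat list \<Rightarrow> bool" where
  "contracts \<Theta> g \<longleftrightarrow> (g, lower_cover g) \<in> \<Theta>"

definition perm_prod :: "nat list \<Rightarrow> nat list \<Rightarrow> nat list" (infixl "\<otimes>" 70) where
  "u \<otimes> v = u @ map (\<lambda>i. length u + i) v"

definition ident :: "nat \<Rightarrow> nat list" where
  "ident k = [1..<k+1]"

definition is_translate :: "nat list \<Rightarrow> nat list \<Rightarrow> bool" where
  "is_translate x y \<longleftrightarrow> (\<exists>p q. x = ident p \<otimes> y \<otimes> ident q)"

definition untranslated :: "nat list \<Rightarrow> bool" where
  "untranslated x \<longleftrightarrow> x \<noteq> [] \<and> hd x > 1 \<and> last x < length x"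

definition Tr :: "nat list set \<Rightarrow> nat \<Rightarrow> (nat list \<times> nat list) set" where
  "Tr C n = \<Inter> {\<Theta>. lattice_cong n \<Theta> \<and>
     (\<forall>g\<in>perms n. join_irreducible g \<and> (\<exists>y\<in>C. is_translate g y) \<longrightarrow> contracts \<Theta> g)}"

definition translational :: "(nat \<Rightarrow> (nat list \<times> nat list) set) \<Rightarrow> bool" where
  "translational \<Theta> \<longleftrightarrow> (\<forall>p q. \<forall>u\<in>perms p. \<forall>u'\<in>perms p. \<forall>v\<in>perms q. \<forall>v'\<in>perms q.
     (u \<otimes> v, u' \<otimes> v') \<in> \<Theta> (p + q) \<longleftrightarrow> (u, u') \<in> \<Theta> p \<and> (v, v') \<in> \<Theta> q)"

end

(*
  A permutation of [n] is determined by its inversion set, and the inversion sets are exactly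
  the sets of pairs 1 <= a < b <= n that are transitive and cotransitive. Hence the join of x
  and y has as inversion set the transitive closure of inv x and inv y, and cutting inversion
  sets down to a block of values is a lattice homomorphism. The products u x v form a lower set
  of S_(p+q) isomorphic to S_p x S_q, so covers, joins and meets of products are computed
  blockwise. It follows that every join-irreducible is a translate of an untranslated one, and
  that an untranslated join-irreducible of S_k has only the inversion (1, k) beyond those of its
  lower cover; this inversion straddles every block boundary.

  A congruence of a finite lattice is determined by the join-irreducibles it contracts, and in a
  translational family y is contracted exactly when its translates are; so a translational
  family is Tr(C) for C the set of its contracted untranslated join-irreducibles. Conversely
  Tr(C) is translational: translations and block restrictions are lattice homomorphisms, so the
  preimages of Tr(C) are congruences, and they contract every translate of an element of C,
  the straddling inversion being invisible to both block restrictions.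
*)

theory Submission
  imports Defs
begin

section \<open>Positions in a word\<close>

fun occurs_before :: "'a list \<Rightarrow> 'a \<Rightarrow> 'a \<Rightarrow> bool" where
  "occurs_before [] x y \<longleftrightarrow> False"
| "occurs_before (a # w) x y \<longleftrightarrow> (a = x \<and> y \<in> set w) \<or> occurs_before w x y"

lemma occurs_before_iff_nth:
  "occurs_before w x y \<longleftrightarrow> (\<exists>i j. i < j \<and> j < length w \<and> w ! i = x \<and> w ! j = y)"
proof (induction w)
  case (Cons a w)
  show ?case
  proof
    assume "occurs_before (a # w) x y"
    then show "\<exists>i j. i < j \<and> j < length (a # w) \<and> (a # w) ! i = x \<and> (a # w) ! j = y"
    proof (elim occurs_before.simps(2)[THEN iffD1, elim_format] disjE conjE)
      assume "a = x" "y \<in> set w"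
      then obtain j where "j < length w" "w ! j = y" by (auto simp: in_set_conv_nth)
      with \<open>a = x\<close> show ?thesis by (intro exI[of _ 0] exI[of _ "Suc j"]) auto
    next
      assume "occurs_before w x y"
      then obtain i j where "i < j" "j < length w" "w ! i = x" "w ! j = y" using Cons.IH by blast
      then show ?thesis by (intro exI[of _ "Suc i"] exI[of _ "Suc j"]) auto
    qed
  next
    assume "\<exists>i j. i < j \<and> j < length (a # w) \<and> (a # w) ! i = x \<and> (a # w) ! j = y"
    then obtain i j where ij: "i < j" "j < Suc (length w)" "(a # w) ! i = x" "(a # w) ! j = y" by auto
    then obtain j' where j': "j = Suc j'" by (cases j) auto
    show "occurs_before (a # w) x y"
    proof (cases i)
      case 0
      then show ?thesis using ij j' by auto
    next
      case (Suc i')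
      then show ?thesis using ij j' Cons.IH by auto
    qed
  qed
qed simp

lemma inv_set_occurs_before: "inv_set w = {(a, b). a < b \<and> occurs_before w b a}"
  unfolding inv_set_def occurs_before_iff_nth by auto

lemma occurs_before_set: "occurs_before w x y \<Longrightarrow> x \<in> set w \<and> y \<in> set w"
  by (induction w) auto

lemma occurs_before_irrefl: "distinct w \<Longrightarrow> \<not> occurs_before w x x"
  by (induction w) (auto dest: occurs_before_set)

lemma occurs_before_trans:
  "distinct w \<Longrightarrow> occurs_before w x y \<Longrightarrow> occurs_before w y z \<Longrightarrow> occurs_before w x z"
  by (induction w) (auto dest: occurs_before_set)

lemma occurs_before_asym: "distinct w \<Longrightarrow> occurs_before w x y \<Longrightarrow> \<not> occurs_before w y x"
  using occurs_before_irrefl occurs_before_trans by metis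

lemma occurs_before_total:
  "x \<in> set w \<Longrightarrow> y \<in> set w \<Longrightarrow> x \<noteq> y \<Longrightarrow> occurs_before w x y \<or> occurs_before w y x"
  by (induction w) auto

lemma occurs_before_append:
  "occurs_before (xs @ ys) x y \<longleftrightarrow>
     occurs_before xs x y \<or> occurs_before ys x y \<or> (x \<in> set xs \<and> y \<in> set ys)"
  by (induction xs) auto

lemma occurs_before_map_add:
  "occurs_before (map (\<lambda>i. p + i) v) x y \<longleftrightarrow> p \<le> x \<and> p \<le> y \<and> occurs_before v (x - p) (y - p :: nat)"
  by (induction v) (auto simp: image_iff le_iff_add)

lemma occurs_before_sorted_wrt: "sorted_wrt R w \<Longrightarrow> occurs_before w x y \<Longrightarrow> R x y"
  by (induction w) auto

lemma distinct_eq_if_occurs_before_eq: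
  assumes "distinct xs" "distinct ys" "set xs = set ys"
    and "\<And>u v. occurs_before xs u v \<longleftrightarrow> occurs_before ys u v"
  shows "xs = ys"
  using assms
proof (induction xs arbitrary: ys)
  case Nil
  then show ?case by simp
next
  case (Cons a xs)
  then obtain b ys' where ys: "ys = b # ys'" by (cases ys) auto
  have "a = b"
  proof (rule ccontr)
    assume "a \<noteq> b"
    then have "occurs_before ys b a" using ys Cons.prems(3) by auto
    then have "occurs_before (a # xs) b a" using Cons.prems(4) by blast
    then show False using Cons.prems(1) \<open>a \<noteq> b\<close> by (auto dest: occurs_before_set)
  qed
  have "xs = ys'"
  proof (rule Cons.IH)
    show "distinct xs" "distinct ys'" using Cons.prems ys by auto
    show "set xs = set ys'"
      using Cons.prems ys \<open>a = b\<close> by (metis Diff_insert_absorb distinct.simps(2) list.simps(15))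
    show "occurs_before xs u v \<longleftrightarrow> occurs_before ys' u v" for u v
    proof (cases "u = a")
      case True
      then show ?thesis using Cons.prems(1,2) ys \<open>a = b\<close> by (auto dest: occurs_before_set)
    next
      case False
      then show ?thesis using Cons.prems(4)[of u v] ys \<open>a = b\<close> by simp
    qed
  qed
  then show ?case using ys \<open>a = b\<close> by simp
qed

section \<open>Inversion sets\<close>

definition all_pairs :: "nat \<Rightarrow> (nat \<times> nat) set" where
  "all_pairs n = {(a, b). 1 \<le> a \<and> a < b \<and> b \<le> n}"

definition cotransitive :: "(nat \<times> nat) set \<Rightarrow> bool" where
  "cotransitive R \<longleftrightarrow> (\<forall>a b c. (a, c) \<in> R \<longrightarrow> a < b \<longrightarrow> b < c \<longrightarrow> (a, b) \<in> R \<or> (b, c) \<in> R)"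

lemma cotransitiveD:
  "cotransitive R \<Longrightarrow> (a, c) \<in> R \<Longrightarrow> a < b \<Longrightarrow> b < c \<Longrightarrow> (a, b) \<in> R \<or> (b, c) \<in> R"
  unfolding cotransitive_def by blast

lemma finite_all_pairs: "finite (all_pairs n)"
  by (rule finite_subset[of _ "{1..n} \<times> {1..n}"]) (auto simp: all_pairs_def)

lemma cotransitive_Diff_all_pairs_iff:
  assumes "I \<subseteq> all_pairs n"
  shows "cotransitive (all_pairs n - I) \<longleftrightarrow> trans I"
proof
  assume co: "cotransitive (all_pairs n - I)"
  show "trans I"
  proof (rule transI)
    fix a b c assume "(a, b) \<in> I" "(b, c) \<in> I"
    with assms have "(a, b) \<in> all_pairs n" "(b, c) \<in> all_pairs n" by auto
    with co \<open>(a, b) \<in> I\<close> \<open>(b, c) \<in> I\<close> show "(a, c) \<in> I"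
      unfolding all_pairs_def by (auto dest: cotransitiveD[of _ a c b])
  qed
next
  assume "trans I"
  then show "cotransitive (all_pairs n - I)"
    unfolding cotransitive_def all_pairs_def by (auto dest: transD)
qed

lemma trans_Diff_all_pairs_iff:
  assumes "I \<subseteq> all_pairs n"
  shows "trans (all_pairs n - I) \<longleftrightarrow> cotransitive I"
proof -
  have "all_pairs n - (all_pairs n - I) = I" using assms by blast
  then show ?thesis using cotransitive_Diff_all_pairs_iff[of "all_pairs n - I" n] by simp
qed

text \<open>\<open>inv_prec I x y\<close>: \<open>x\<close> precedes \<open>y\<close> in any permutation with inversion set \<open>I\<close>.\<close>

definition inv_prec :: "(nat \<times> nat) set \<Rightarrow> nat \<Rightarrow> nat \<Rightarrow> bool" where
  "inv_prec I x y \<longleftrightarrow> (y < x \<and> (y, x) \<in> I) \<or> (x < y \<and> (x, y) \<notin> I)"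

lemma inv_prec_trans:
  assumes "trans I" "cotransitive I" "inv_prec I x y" "inv_prec I y z"
  shows "inv_prec I x z"
  using assms(3,4) linorder_neqE_nat[of x z] unfolding inv_prec_def
  by (auto dest: cotransitiveD[OF assms(2)] transD[OF assms(1)])

lemma perms_length: "w \<in> perms n \<Longrightarrow> length w = n"
  by (simp add: perms_def)

lemma occurs_before_perm_iff:
  assumes "w \<in> perms n"
  shows "occurs_before w x y \<longleftrightarrow> x \<in> {1..n} \<and> y \<in> {1..n} \<and> inv_prec (inv_set w) x y"
proof -
  have w: "distinct w" "set w = {1..n}" using assms by (auto simp: perms_def)
  have inv: "(a, b) \<in> inv_set w \<longleftrightarrow> a < b \<and> occurs_before w b a" for a b
    by (simp add: inv_set_occurs_before)
  show ?thesis
  proof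
    assume xy: "occurs_before w x y"
    then have "x \<noteq> y" "\<not> occurs_before w y x"
      using occurs_before_irrefl[OF w(1)] occurs_before_asym[OF w(1)] by auto
    then show "x \<in> {1..n} \<and> y \<in> {1..n} \<and> inv_prec (inv_set w) x y"
      using xy occurs_before_set[OF xy] w(2) by (auto simp: inv_prec_def inv linorder_neq_iff)
  next
    assume "x \<in> {1..n} \<and> y \<in> {1..n} \<and> inv_prec (inv_set w) x y"
    then show "occurs_before w x y"
      using occurs_before_total[of x w y] w(2) by (auto simp: inv_prec_def inv)
  qed
qed

lemma inv_set_inj:
  assumes "x \<in> perms n" "y \<in> perms n" "inv_set x = inv_set y"
  shows "x = y"
proof (rule distinct_eq_if_occurs_before_eq)
  show "distinct x" "distinct y" "set x = set y" using assms by (auto simp: perms_def)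
  show "occurs_before x u v \<longleftrightarrow> occurs_before y u v" for u v
    unfolding occurs_before_perm_iff[OF assms(1)] occurs_before_perm_iff[OF assms(2)] assms(3) ..
qed

lemma inv_set_subset_all_pairs: "w \<in> perms n \<Longrightarrow> inv_set w \<subseteq> all_pairs n"
  by (auto simp: inv_set_occurs_before all_pairs_def perms_def dest: occurs_before_set)

lemma inv_set_memD: "w \<in> perms n \<Longrightarrow> (a, b) \<in> inv_set w \<Longrightarrow> 1 \<le> a \<and> a < b \<and> b \<le> n"
  using inv_set_subset_all_pairs unfolding all_pairs_def by blast

lemma trans_inv_set:
  assumes "w \<in> perms n"
  shows "trans (inv_set w)"
proof -
  have "distinct w" using assms by (simp add: perms_def)
  then show ?thesis
    unfolding inv_set_occurs_before by (auto intro: transI dest: occurs_before_trans)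
qed

lemma cotransitive_inv_set:
  assumes "w \<in> perms n"
  shows "cotransitive (inv_set w)"
proof -
  have "distinct w" using assms by (simp add: perms_def)
  have "all_pairs n - inv_set w = {(a, b) \<in> all_pairs n. occurs_before w a b}"
    using occurs_before_perm_iff[OF assms] by (auto simp: all_pairs_def inv_prec_def)
  then have "trans (all_pairs n - inv_set w)"
    using occurs_before_trans[OF \<open>distinct w\<close>] unfolding trans_def all_pairs_def by auto
  then show ?thesis using trans_Diff_all_pairs_iff[OF inv_set_subset_all_pairs[OF assms]] by simp
qed

definition inv_rank :: "nat \<Rightarrow> (nat \<times> nat) set \<Rightarrow> nat \<Rightarrow> nat" where
  "inv_rank n I x = card {y \<in> {1..n}. inv_prec I y x}"

lemma inv_prec_irrefl: "\<not> inv_prec I x x"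
  by (simp add: inv_prec_def)

lemma inv_prec_total: "x \<noteq> y \<Longrightarrow> inv_prec I x y \<or> inv_prec I y x"
  by (auto simp: inv_prec_def linorder_neq_iff)

lemma inv_rank_less:
  assumes "trans I" "cotransitive I" "y \<in> {1..n}" "inv_prec I y x"
  shows "inv_rank n I y < inv_rank n I x"
  unfolding inv_rank_def
proof (rule psubset_card_mono)
  have "{z \<in> {1..n}. inv_prec I z y} \<subseteq> {z \<in> {1..n}. inv_prec I z x}"
    using inv_prec_trans[OF assms(1,2) _ assms(4)] by blast
  moreover have "y \<notin> {z \<in> {1..n}. inv_prec I z y}" "y \<in> {z \<in> {1..n}. inv_prec I z x}"
    using assms(3,4) inv_prec_irrefl by auto
  ultimately show "{z \<in> {1..n}. inv_prec I z y} \<subset> {z \<in> {1..n}. inv_prec I z x}"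
    by blast
qed simp

lemma inv_set_realizable:
  assumes "I \<subseteq> all_pairs n" "trans I" "cotransitive I"
  shows "\<exists>w\<in>perms n. inv_set w = I"
proof -
  let ?r = "inv_rank n I"
  define w where "w = sort_key ?r [1..<n+1]"
  have w: "distinct w" "set w = {1..n}" "w \<in> perms n" unfolding w_def perms_def by auto
  have sorted: "sorted_wrt (\<lambda>x y. ?r x \<le> ?r y) w"
    using sorted_sort_key[of ?r "[1..<n+1]"] unfolding w_def sorted_map .
  have before: "occurs_before w y x \<longleftrightarrow> x \<in> {1..n} \<and> y \<in> {1..n} \<and> inv_prec I y x" for x y
  proof
    assume yx: "occurs_before w y x"
    then have "x \<in> {1..n}" "y \<in> {1..n}" "x \<noteq> y" "?r y \<le> ?r x"
      using occurs_before_set[OF yx] occurs_before_irrefl[OF w(1)]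
        occurs_before_sorted_wrt[OF sorted yx] w(2) by auto
    moreover have "\<not> inv_prec I x y"
      using inv_rank_less[OF assms(2,3) \<open>x \<in> {1..n}\<close>] \<open>?r y \<le> ?r x\<close> leD by blast
    ultimately show "x \<in> {1..n} \<and> y \<in> {1..n} \<and> inv_prec I y x"
      using inv_prec_total by blast
  next
    assume yx: "x \<in> {1..n} \<and> y \<in> {1..n} \<and> inv_prec I y x"
    then have "x \<noteq> y" "?r y < ?r x"
      using inv_prec_irrefl inv_rank_less[OF assms(2,3)] by blast+
    then have "\<not> occurs_before w x y"
      using occurs_before_sorted_wrt[OF sorted, of x y] by auto
    then show "occurs_before w y x"
      using yx w(2) occurs_before_total[of x w y] \<open>x \<noteq> y\<close> by blast
  qed
  have "inv_set w = I"
    using assms(1) unfolding inv_set_occurs_before before inv_prec_def all_pairs_def by auto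
  with w(3) show ?thesis by blast
qed

definition perm_of_inv :: "nat \<Rightarrow> (nat \<times> nat) set \<Rightarrow> nat list" where
  "perm_of_inv n I = (THE w. w \<in> perms n \<and> inv_set w = I)"

lemma perm_of_inv:
  assumes "I \<subseteq> all_pairs n" "trans I" "cotransitive I"
  shows "perm_of_inv n I \<in> perms n" "inv_set (perm_of_inv n I) = I"
proof -
  obtain w where w: "w \<in> perms n" "inv_set w = I" using inv_set_realizable[OF assms] by blast
  have "perm_of_inv n I = w"
    unfolding perm_of_inv_def using w inv_set_inj by (intro the_equality) auto
  then show "perm_of_inv n I \<in> perms n" "inv_set (perm_of_inv n I) = I" using w by auto
qed

section \<open>Joins and meets in the weak order\<close>

lemma trancl_least: "r \<subseteq> s \<Longrightarrow> trans s \<Longrightarrow> r\<^sup>+ \<subseteq> s"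
  using trancl_mono_subset[of r s] by simp

lemma trancl_subset_all_pairs: "R \<subseteq> all_pairs n \<Longrightarrow> R\<^sup>+ \<subseteq> all_pairs n"
  by (rule trancl_least) (auto simp: trans_def all_pairs_def)

lemma all_pairs_increasing: "all_pairs n \<subseteq> {(a, b). a < b}"
  by (auto simp: all_pairs_def)

lemma cotransitive_Un: "cotransitive A \<Longrightarrow> cotransitive B \<Longrightarrow> cotransitive (A \<union> B)"
  unfolding cotransitive_def by blast

lemma cotransitive_trancl:
  assumes co: "cotransitive R" and up: "R \<subseteq> {(a, b). a < b}"
  shows "cotransitive (R\<^sup>+)"
  unfolding cotransitive_def
proof (intro allI impI)
  fix a b c assume "(a, c) \<in> R\<^sup>+"
  then show "a < b \<Longrightarrow> b < c \<Longrightarrow> (a, b) \<in> R\<^sup>+ \<or> (b, c) \<in> R\<^sup>+"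
  proof (induction arbitrary: b rule: trancl_induct)
    case (base c)
    then show ?case using cotransitiveD[OF co] by blast
  next
    case (step c d)
    consider "b < c" | "b = c" | "c < b" by arith
    then show ?case
    proof cases
      case 1
      then show ?thesis using step.IH[OF step.prems(1)] step.hyps(2) by (meson trancl_into_trancl)
    next
      case 2
      then show ?thesis using step.hyps(1) by simp
    next
      case 3
      then have "(c, b) \<in> R \<or> (b, d) \<in> R" using cotransitiveD[OF co step.hyps(2)] step.prems(2) by blast
      then show ?thesis using step.hyps(1) by (meson r_into_trancl trancl_into_trancl)
    qed
  qed
qed

lemma weak_le_refl [simp]: "weak_le x x"
  by (simp add: weak_le_def)

lemma weak_le_trans: "weak_le x y \<Longrightarrow> weak_le y z \<Longrightarrow> weak_le x z"
  by (auto simp: weak_le_def)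

lemma weak_le_antisym: "x \<in> perms n \<Longrightarrow> y \<in> perms n \<Longrightarrow> weak_le x y \<Longrightarrow> weak_le y x \<Longrightarrow> x = y"
  using inv_set_inj by (auto simp: weak_le_def)

lemma is_join_unique: "is_join n x y z \<Longrightarrow> is_join n x y z' \<Longrightarrow> z = z'"
  unfolding is_join_def using weak_le_antisym by blast

lemma is_meet_unique: "is_meet n x y z \<Longrightarrow> is_meet n x y z' \<Longrightarrow> z = z'"
  unfolding is_meet_def using weak_le_antisym by blast

lemma wjoin_is_join:
  assumes x: "x \<in> perms n" and y: "y \<in> perms n"
  shows "is_join n x y (wjoin n x y)" "inv_set (wjoin n x y) = (inv_set x \<union> inv_set y)\<^sup>+"
proof -
  let ?J = "(inv_set x \<union> inv_set y)\<^sup>+"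
  have U: "inv_set x \<union> inv_set y \<subseteq> all_pairs n"
    using inv_set_subset_all_pairs[OF x] inv_set_subset_all_pairs[OF y] by blast
  have J: "?J \<subseteq> all_pairs n" "trans ?J" "cotransitive ?J"
    using trancl_subset_all_pairs[OF U] cotransitive_trancl[OF _ subset_trans[OF U all_pairs_increasing]]
      cotransitive_Un[OF cotransitive_inv_set[OF x] cotransitive_inv_set[OF y]] by auto
  have join: "is_join n x y (perm_of_inv n ?J)"
    unfolding is_join_def weak_le_def perm_of_inv(2)[OF J]
  proof (intro conjI ballI impI)
    show "inv_set x \<subseteq> ?J" "inv_set y \<subseteq> ?J" by auto
    fix w assume "w \<in> perms n" "inv_set x \<subseteq> inv_set w \<and> inv_set y \<subseteq> inv_set w"
    then show "?J \<subseteq> inv_set w" by (intro trancl_least trans_inv_set) auto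
  qed (rule perm_of_inv(1)[OF J])
  then have "wjoin n x y = perm_of_inv n ?J"
    unfolding wjoin_def using is_join_unique by blast
  then show "is_join n x y (wjoin n x y)" "inv_set (wjoin n x y) = ?J" using join perm_of_inv[OF J] by simp_all
qed

lemma wmeet_is_meet:
  assumes x: "x \<in> perms n" and y: "y \<in> perms n"
  shows "is_meet n x y (wmeet n x y)"
    "inv_set (wmeet n x y) = all_pairs n - ((all_pairs n - inv_set x) \<union> (all_pairs n - inv_set y))\<^sup>+"
proof -
  let ?C = "((all_pairs n - inv_set x) \<union> (all_pairs n - inv_set y))\<^sup>+"
  let ?M = "all_pairs n - ?C"
  have cotrans_compl: "cotransitive (all_pairs n - inv_set w)" if "w \<in> perms n" for w
    using cotransitive_Diff_all_pairs_iff[OF inv_set_subset_all_pairs] trans_inv_set that by blast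
  have U: "(all_pairs n - inv_set x) \<union> (all_pairs n - inv_set y) \<subseteq> all_pairs n" by blast
  have C: "?C \<subseteq> all_pairs n" "cotransitive ?C"
    using trancl_subset_all_pairs[OF U] cotransitive_trancl[OF _ subset_trans[OF U all_pairs_increasing]]
      cotransitive_Un[OF cotrans_compl[OF x] cotrans_compl[OF y]] by auto
  have M: "?M \<subseteq> all_pairs n" "trans ?M" "cotransitive ?M"
    using C trans_Diff_all_pairs_iff[OF C(1)] cotransitive_Diff_all_pairs_iff[OF C(1)] by auto
  have meet: "is_meet n x y (perm_of_inv n ?M)"
    unfolding is_meet_def weak_le_def perm_of_inv(2)[OF M]
  proof (intro conjI ballI impI)
    show "?M \<subseteq> inv_set x" "?M \<subseteq> inv_set y" by auto
    fix w assume w: "w \<in> perms n" "inv_set w \<subseteq> inv_set x \<and> inv_set w \<subseteq> inv_set y"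
    have "trans (all_pairs n - inv_set w)"
      using trans_Diff_all_pairs_iff[OF inv_set_subset_all_pairs] cotransitive_inv_set w(1) by blast
    with w have "?C \<subseteq> all_pairs n - inv_set w" by (intro trancl_least) blast+
    then show "inv_set w \<subseteq> ?M" using inv_set_subset_all_pairs[OF w(1)] by blast
  qed (rule perm_of_inv(1)[OF M])
  then have "wmeet n x y = perm_of_inv n ?M"
    unfolding wmeet_def using is_meet_unique by blast
  then show "is_meet n x y (wmeet n x y)" "inv_set (wmeet n x y) = ?M" using meet perm_of_inv[OF M] by simp_all
qed

lemma
  assumes "x \<in> perms n" "y \<in> perms n"
  shows wjoin_perms: "wjoin n x y \<in> perms n"
    and inv_set_wjoin: "inv_set (wjoin n x y) = (inv_set x \<union> inv_set y)\<^sup>+"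
    and wjoin_upper: "weak_le x (wjoin n x y)" "weak_le y (wjoin n x y)"
    and wjoin_least: "\<And>w. w \<in> perms n \<Longrightarrow> weak_le x w \<Longrightarrow> weak_le y w \<Longrightarrow> weak_le (wjoin n x y) w"
  using wjoin_is_join[OF assms] unfolding is_join_def by blast+

lemma
  assumes "x \<in> perms n" "y \<in> perms n"
  shows wmeet_perms: "wmeet n x y \<in> perms n"
    and inv_set_wmeet:
      "inv_set (wmeet n x y) = all_pairs n - ((all_pairs n - inv_set x) \<union> (all_pairs n - inv_set y))\<^sup>+"
    and wmeet_lower: "weak_le (wmeet n x y) x" "weak_le (wmeet n x y) y"
    and wmeet_greatest: "\<And>w. w \<in> perms n \<Longrightarrow> weak_le w x \<Longrightarrow> weak_le w y \<Longrightarrow> weak_le w (wmeet n x y)"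
  using wmeet_is_meet[OF assms] unfolding is_meet_def by blast+

lemma wjoin_commute: "x \<in> perms n \<Longrightarrow> y \<in> perms n \<Longrightarrow> wjoin n x y = wjoin n y x"
  by (meson weak_le_antisym wjoin_perms wjoin_least wjoin_upper)

lemma wmeet_commute: "x \<in> perms n \<Longrightarrow> y \<in> perms n \<Longrightarrow> wmeet n x y = wmeet n y x"
  by (meson weak_le_antisym wmeet_perms wmeet_greatest wmeet_lower)

lemma wjoin_absorb:
  assumes "x \<in> perms n" "y \<in> perms n" "weak_le x y"
  shows "wjoin n x y = y" "wjoin n y x = y"
  using weak_le_antisym[OF wjoin_perms assms(2)] wjoin_least wjoin_upper assms
  by (metis weak_le_refl wjoin_commute)+

lemma wmeet_absorb:
  assumes "x \<in> perms n" "y \<in> perms n" "weak_le x y"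
  shows "wmeet n x y = x" "wmeet n y x = x"
  using weak_le_antisym[OF wmeet_perms assms(1)] wmeet_greatest wmeet_lower assms
  by (metis weak_le_refl wmeet_commute)+

section \<open>Products, translates and restrictions\<close>

lemma ident_perms: "ident k \<in> perms k"
  by (auto simp: ident_def perms_def)

lemma length_ident [simp]: "length (ident k) = k"
  by (simp add: ident_def)

lemma ident_0 [simp]: "ident 0 = []"
  by (simp add: ident_def)

lemma inv_set_ident [simp]: "inv_set (ident k) = {}"
  unfolding inv_set_def ident_def by (auto simp: nth_upt simp del: upt_Suc)

lemma ident_weak_le: "weak_le (ident n) x"
  by (simp add: weak_le_def)

definition shift_pairs :: "nat \<Rightarrow> (nat \<times> nat) set \<Rightarrow> (nat \<times> nat) set" where
  "shift_pairs k I = (\<lambda>(a, b). (a + k, b + k)) ` I"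

lemma mem_shift_pairs: "(x, y) \<in> shift_pairs k I \<longleftrightarrow> k \<le> x \<and> k \<le> y \<and> (x - k, y - k) \<in> I"
  unfolding shift_pairs_def by (force simp: image_iff le_iff_add)

lemma shift_pairs_mono: "I \<subseteq> J \<Longrightarrow> shift_pairs k I \<subseteq> shift_pairs k J"
  by (auto simp: shift_pairs_def)

lemma length_perm_prod [simp]: "length (u \<otimes> v) = length u + length v"
  by (simp add: perm_prod_def)

lemma perm_prod_assoc: "(u \<otimes> v) \<otimes> w = u \<otimes> (v \<otimes> w)"
  by (simp add: perm_prod_def add.assoc)

lemma perm_prod_Nil [simp]: "[] \<otimes> v = v" "u \<otimes> [] = u"
  by (simp_all add: perm_prod_def)

lemma perm_prod_perms:
  assumes "u \<in> perms p" "v \<in> perms q"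
  shows "u \<otimes> v \<in> perms (p + q)"
proof -
  have "set (map (\<lambda>i. p + i) v) = {p + 1..p + q}" "distinct (map (\<lambda>i. p + i) v)"
    using assms(2) by (auto simp: perms_def distinct_map)
  then show ?thesis using assms by (auto simp: perms_def perm_prod_def)
qed

lemma inv_set_perm_prod:
  assumes "u \<in> perms p" "v \<in> perms q"
  shows "inv_set (u \<otimes> v) = inv_set u \<union> shift_pairs p (inv_set v)"
proof -
  have "set u = {1..p}" "length u = p" "set (map (\<lambda>i. p + i) v) = {p + 1..p + q}"
    using assms by (auto simp: perms_def)
  then show ?thesis
    unfolding inv_set_occurs_before perm_prod_def occurs_before_append occurs_before_map_add
    by (auto simp: mem_shift_pairs dest: occurs_before_set)
qed

lemma ident_perm_prod_ident: "ident a \<otimes> ident b = ident (a + b)"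
  by (rule inv_set_inj[OF perm_prod_perms[OF ident_perms ident_perms] ident_perms])
    (simp add: inv_set_perm_prod[OF ident_perms ident_perms] shift_pairs_def)

abbreviation translate :: "nat \<Rightarrow> nat \<Rightarrow> nat list \<Rightarrow> nat list" where
  "translate a b y \<equiv> ident a \<otimes> y \<otimes> ident b"

lemma translate_translate: "translate a b (translate c d y) = translate (a + c) (d + b) y"
  by (simp add: perm_prod_assoc ident_perm_prod_ident[symmetric])

lemma translate_perms: "y \<in> perms k \<Longrightarrow> translate a b y \<in> perms (a + k + b)"
  by (intro perm_prod_perms ident_perms)

lemma inv_set_translate:
  assumes "y \<in> perms k"
  shows "inv_set (translate a b y) = shift_pairs a (inv_set y)"
proof -
  have "ident a \<otimes> y \<in> perms (a + k)" by (rule perm_prod_perms[OF ident_perms assms])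
  then show ?thesis
    by (simp add: inv_set_perm_prod[OF _ ident_perms] inv_set_perm_prod[OF ident_perms assms]
        shift_pairs_def)
qed

definition restrict_pairs :: "nat \<Rightarrow> nat \<Rightarrow> (nat \<times> nat) set \<Rightarrow> (nat \<times> nat) set" where
  "restrict_pairs l m I = {(a, b) \<in> all_pairs (m - l). (a + l, b + l) \<in> I}"

lemma restrict_pairs_Un: "restrict_pairs l m (A \<union> B) = restrict_pairs l m A \<union> restrict_pairs l m B"
  by (auto simp: restrict_pairs_def)

lemma restrict_pairs_mono: "A \<subseteq> B \<Longrightarrow> restrict_pairs l m A \<subseteq> restrict_pairs l m B"
  by (auto simp: restrict_pairs_def)

lemma restrict_pairs_Diff_all_pairs:
  "m \<le> n \<Longrightarrow> restrict_pairs l m (all_pairs n - I) = all_pairs (m - l) - restrict_pairs l m I"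
  by (auto simp: restrict_pairs_def all_pairs_def)

lemma trancl_increasing: "R \<subseteq> {(a, b). a < b} \<Longrightarrow> R\<^sup>+ \<subseteq> {(a, b :: nat). a < b}"
  by (rule trancl_least) (auto simp: trans_def)

lemma restrict_pairs_trancl:
  assumes up: "R \<subseteq> {(a, b). a < b}"
  shows "restrict_pairs l m (R\<^sup>+) = (restrict_pairs l m R)\<^sup>+"
proof
  show "(restrict_pairs l m R)\<^sup>+ \<subseteq> restrict_pairs l m (R\<^sup>+)"
    by (rule trancl_least)
      (auto simp: restrict_pairs_def all_pairs_def trans_def intro: trancl_trans)
next
  have "l < s \<longrightarrow> t \<le> m \<longrightarrow> (s - l, t - l) \<in> (restrict_pairs l m R)\<^sup>+" if "(s, t) \<in> R\<^sup>+" for s t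
    using that
  proof (induction rule: trancl_induct)
    case (base t)
    then show ?case using up by (auto simp: restrict_pairs_def all_pairs_def intro!: r_into_trancl)
  next
    case (step t u)
    have "s < t" "t < u" using step.hyps trancl_increasing[OF up] up by auto
    show ?case
    proof (intro impI)
      assume "l < s" "u \<le> m"
      then have "(s - l, t - l) \<in> (restrict_pairs l m R)\<^sup>+" using step.IH \<open>t < u\<close> by simp
      moreover have "(t - l, u - l) \<in> restrict_pairs l m R"
        using step.hyps(2) \<open>l < s\<close> \<open>s < t\<close> \<open>t < u\<close> \<open>u \<le> m\<close>
        by (auto simp: restrict_pairs_def all_pairs_def)
      ultimately show "(s - l, u - l) \<in> (restrict_pairs l m R)\<^sup>+" by (rule trancl_into_trancl)
    qed
  qed
  then show "restrict_pairs l m (R\<^sup>+) \<subseteq> (restrict_pairs l m R)\<^sup>+"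
    by (force simp: restrict_pairs_def all_pairs_def)
qed

lemma restrict_pairs_subset_all_pairs: "restrict_pairs l m I \<subseteq> all_pairs (m - l)"
  by (auto simp: restrict_pairs_def)

lemma trans_restrict_pairs:
  assumes "trans I"
  shows "trans (restrict_pairs l m I)"
proof (rule transI)
  fix a b c assume "(a, b) \<in> restrict_pairs l m I" "(b, c) \<in> restrict_pairs l m I"
  then show "(a, c) \<in> restrict_pairs l m I"
    using transD[OF assms, of "a + l" "b + l" "c + l"] by (auto simp: restrict_pairs_def all_pairs_def)
qed

lemma cotransitive_restrict_pairs:
  assumes "cotransitive I"
  shows "cotransitive (restrict_pairs l m I)"
  unfolding cotransitive_def
proof (intro allI impI)
  fix a b c assume "(a, c) \<in> restrict_pairs l m I" "a < b" "b < c"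
  then show "(a, b) \<in> restrict_pairs l m I \<or> (b, c) \<in> restrict_pairs l m I"
    using cotransitiveD[OF assms, of "a + l" "c + l" "b + l"] by (auto simp: restrict_pairs_def all_pairs_def)
qed

text \<open>The standardization of the subword of \<open>w\<close> formed by the values \<open>l + 1, \<dots>, m\<close>.\<close>

definition restrict_values :: "nat \<Rightarrow> nat \<Rightarrow> nat list \<Rightarrow> nat list" where
  "restrict_values l m w = perm_of_inv (m - l) (restrict_pairs l m (inv_set w))"

lemma
  assumes "w \<in> perms n"
  shows restrict_values_perms: "restrict_values l m w \<in> perms (m - l)"
    and inv_set_restrict_values: "inv_set (restrict_values l m w) = restrict_pairs l m (inv_set w)"
  using perm_of_inv[OF restrict_pairs_subset_all_pairs trans_restrict_pairs cotransitive_restrict_pairs]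
    trans_inv_set[OF assms] cotransitive_inv_set[OF assms]
  unfolding restrict_values_def by blast+

lemma restrict_values_wjoin:
  assumes x: "x \<in> perms n" and z: "z \<in> perms n"
  shows "restrict_values l m (wjoin n x z) = wjoin (m - l) (restrict_values l m x) (restrict_values l m z)"
proof (rule inv_set_inj)
  show "restrict_values l m (wjoin n x z) \<in> perms (m - l)"
    "wjoin (m - l) (restrict_values l m x) (restrict_values l m z) \<in> perms (m - l)"
    using x z by (auto intro!: restrict_values_perms wjoin_perms)
  have "inv_set x \<union> inv_set z \<subseteq> {(a, b). a < b}"
    using inv_set_subset_all_pairs[OF x] inv_set_subset_all_pairs[OF z] all_pairs_increasing by blast
  then show "inv_set (restrict_values l m (wjoin n x z)) =
      inv_set (wjoin (m - l) (restrict_values l m x) (restrict_values l m z))"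
    by (simp add: inv_set_restrict_values[OF wjoin_perms[OF x z]] inv_set_wjoin[OF x z]
        inv_set_wjoin[OF restrict_values_perms[OF x] restrict_values_perms[OF z]]
        inv_set_restrict_values[OF x] inv_set_restrict_values[OF z] restrict_pairs_trancl restrict_pairs_Un)
qed

lemma restrict_values_wmeet:
  assumes x: "x \<in> perms n" and z: "z \<in> perms n" and "m \<le> n"
  shows "restrict_values l m (wmeet n x z) = wmeet (m - l) (restrict_values l m x) (restrict_values l m z)"
proof (rule inv_set_inj)
  show "restrict_values l m (wmeet n x z) \<in> perms (m - l)"
    "wmeet (m - l) (restrict_values l m x) (restrict_values l m z) \<in> perms (m - l)"
    using x z by (auto intro!: restrict_values_perms wmeet_perms)
  have "(all_pairs n - inv_set x) \<union> (all_pairs n - inv_set z) \<subseteq> {(a, b). a < b}"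
    using all_pairs_increasing by blast
  then show "inv_set (restrict_values l m (wmeet n x z)) =
      inv_set (wmeet (m - l) (restrict_values l m x) (restrict_values l m z))"
    using \<open>m \<le> n\<close>
    by (simp add: inv_set_restrict_values[OF wmeet_perms[OF x z]] inv_set_wmeet[OF x z]
        inv_set_wmeet[OF restrict_values_perms[OF x] restrict_values_perms[OF z]]
        inv_set_restrict_values[OF x] inv_set_restrict_values[OF z] restrict_pairs_trancl restrict_pairs_Un
        restrict_pairs_Diff_all_pairs)
qed

lemma restrict_pairs_inv_set_perm_prod:
  assumes u: "u \<in> perms p" and v: "v \<in> perms q"
  shows "restrict_pairs 0 p (inv_set (u \<otimes> v)) = inv_set u"
    "restrict_pairs p (p + q) (inv_set (u \<otimes> v)) = inv_set v"
  using inv_set_subset_all_pairs[OF u] inv_set_subset_all_pairs[OF v]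
  unfolding inv_set_perm_prod[OF u v]
  by (auto simp: restrict_pairs_def all_pairs_def mem_shift_pairs)

lemma restrict_values_perm_prod:
  assumes u: "u \<in> perms p" and v: "v \<in> perms q"
  shows "restrict_values 0 p (u \<otimes> v) = u" "restrict_values p (p + q) (u \<otimes> v) = v"
proof -
  have uv: "u \<otimes> v \<in> perms (p + q)" by (rule perm_prod_perms[OF u v])
  show "restrict_values 0 p (u \<otimes> v) = u"
    using inv_set_inj[OF restrict_values_perms[OF uv, of 0 p] _] u
    by (simp add: inv_set_restrict_values[OF uv] restrict_pairs_inv_set_perm_prod[OF u v])
  show "restrict_values p (p + q) (u \<otimes> v) = v"
    using inv_set_inj[OF restrict_values_perms[OF uv, of p "p + q"] _] v
    by (simp add: inv_set_restrict_values[OF uv] restrict_pairs_inv_set_perm_prod[OF u v])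
qed

lemma perm_prod_eq_iff:
  assumes "u \<in> perms p" "v \<in> perms q" "u' \<in> perms p" "v' \<in> perms q"
  shows "u \<otimes> v = u' \<otimes> v' \<longleftrightarrow> u = u' \<and> v = v'"
  using restrict_values_perm_prod[OF assms(1,2)] restrict_values_perm_prod[OF assms(3,4)] by metis

lemma weak_le_perm_prod_iff:
  assumes u: "u \<in> perms p" and v: "v \<in> perms q" and u': "u' \<in> perms p" and v': "v' \<in> perms q"
  shows "weak_le (u \<otimes> v) (u' \<otimes> v') \<longleftrightarrow> weak_le u u' \<and> weak_le v v'"
proof
  assume "weak_le (u \<otimes> v) (u' \<otimes> v')"
  then show "weak_le u u' \<and> weak_le v v'"
    using restrict_pairs_mono restrict_pairs_inv_set_perm_prod[OF u v] restrict_pairs_inv_set_perm_prod[OF u' v']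
    unfolding weak_le_def by metis
next
  assume "weak_le u u' \<and> weak_le v v'"
  then show "weak_le (u \<otimes> v) (u' \<otimes> v')"
    unfolding weak_le_def inv_set_perm_prod[OF u v] inv_set_perm_prod[OF u' v']
    using shift_pairs_mono by blast
qed

lemma inv_set_restrict_values_split:
  assumes w: "w \<in> perms n" and "c \<le> n"
  shows "inv_set (restrict_values 0 c w \<otimes> restrict_values c n w) = {(a, b) \<in> inv_set w. b \<le> c \<or> c < a}"
proof -
  have "inv_set (restrict_values 0 c w \<otimes> restrict_values c n w) =
      restrict_pairs 0 c (inv_set w) \<union> shift_pairs c (restrict_pairs c n (inv_set w))"
    using inv_set_perm_prod[OF restrict_values_perms[OF w, of 0 c] restrict_values_perms[OF w, of c n]]
    by (simp add: inv_set_restrict_values[OF w])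
  also have "\<dots> = {(a, b) \<in> inv_set w. b \<le> c \<or> c < a}"
    using \<open>c \<le> n\<close>
    by (fastforce simp: restrict_pairs_def all_pairs_def mem_shift_pairs dest: inv_set_memD[OF w])
  finally show ?thesis .
qed

lemma weak_le_perm_prod_imp_split:
  assumes w: "w \<in> perms (p + q)" and u: "u \<in> perms p" and v: "v \<in> perms q"
    and le: "weak_le w (u \<otimes> v)"
  shows "w = restrict_values 0 p w \<otimes> restrict_values p (p + q) w"
proof (rule inv_set_inj[OF w])
  show "restrict_values 0 p w \<otimes> restrict_values p (p + q) w \<in> perms (p + q)"
    using perm_prod_perms[OF restrict_values_perms[OF w, of 0 p] restrict_values_perms[OF w, of p "p + q"]]
    by simp
  have "inv_set w \<subseteq> {(a, b). b \<le> p \<or> p < a}"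
    using le unfolding weak_le_def inv_set_perm_prod[OF u v]
    by (fastforce simp: mem_shift_pairs dest: inv_set_memD[OF u] inv_set_memD[OF v])
  then show "inv_set w = inv_set (restrict_values 0 p w \<otimes> restrict_values p (p + q) w)"
    unfolding inv_set_restrict_values_split[OF w le_add1] by blast
qed

lemma wjoin_perm_prod:
  assumes a: "a \<in> perms p" and b: "b \<in> perms q" and c: "c \<in> perms p" and d: "d \<in> perms q"
  shows "wjoin (p + q) (a \<otimes> b) (c \<otimes> d) = wjoin p a c \<otimes> wjoin q b d"
proof -
  let ?x = "wjoin (p + q) (a \<otimes> b) (c \<otimes> d)"
  have ab: "a \<otimes> b \<in> perms (p + q)" and cd: "c \<otimes> d \<in> perms (p + q)"
    using perm_prod_perms a b c d by auto
  have ac: "wjoin p a c \<in> perms p" and bd: "wjoin q b d \<in> perms q"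
    using wjoin_perms a b c d by auto
  have "weak_le ?x (wjoin p a c \<otimes> wjoin q b d)"
    using wjoin_least[OF ab cd perm_prod_perms[OF ac bd]] weak_le_perm_prod_iff[OF _ _ ac bd]
      wjoin_upper[OF a c] wjoin_upper[OF b d] a b c d by simp
  then have "?x = restrict_values 0 p ?x \<otimes> restrict_values p (p + q) ?x"
    using weak_le_perm_prod_imp_split[OF wjoin_perms[OF ab cd] ac bd] by simp
  also have "\<dots> = wjoin p a c \<otimes> wjoin q b d"
    using restrict_values_wjoin[OF ab cd, of 0 p] restrict_values_wjoin[OF ab cd, of p "p + q"]
    by (simp add: restrict_values_perm_prod[OF a b] restrict_values_perm_prod[OF c d])
  finally show ?thesis .
qed

lemma wmeet_perm_prod:
  assumes a: "a \<in> perms p" and b: "b \<in> perms q" and c: "c \<in> perms p" and d: "d \<in> perms q"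
  shows "wmeet (p + q) (a \<otimes> b) (c \<otimes> d) = wmeet p a c \<otimes> wmeet q b d"
proof -
  let ?x = "wmeet (p + q) (a \<otimes> b) (c \<otimes> d)"
  have ab: "a \<otimes> b \<in> perms (p + q)" and cd: "c \<otimes> d \<in> perms (p + q)"
    using perm_prod_perms a b c d by auto
  have "?x = restrict_values 0 p ?x \<otimes> restrict_values p (p + q) ?x"
    using weak_le_perm_prod_imp_split[OF wmeet_perms[OF ab cd] a b] wmeet_lower[OF ab cd] by simp
  also have "\<dots> = wmeet p a c \<otimes> wmeet q b d"
    using restrict_values_wmeet[OF ab cd, of p 0] restrict_values_wmeet[OF ab cd, of "p + q" p]
    by (simp add: restrict_values_perm_prod[OF a b] restrict_values_perm_prod[OF c d])
  finally show ?thesis .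
qed

lemma covers_perms_iff:
  "y \<in> perms n \<Longrightarrow> covers x y \<longleftrightarrow> weak_less x y \<and> \<not> (\<exists>z\<in>perms n. weak_less x z \<and> weak_less z y)"
  by (simp add: covers_def perms_def)

lemma weak_less_perm_prod_iff:
  assumes "u \<in> perms p" "v \<in> perms q" "u' \<in> perms p" "v' \<in> perms q"
  shows "weak_less (u \<otimes> v) (u' \<otimes> v') \<longleftrightarrow> weak_le u u' \<and> weak_le v v' \<and> (u \<noteq> u' \<or> v \<noteq> v')"
  unfolding weak_less_def weak_le_perm_prod_iff[OF assms] perm_prod_eq_iff[OF assms] by blast

lemma weak_less_perm_prod_imp_perm_prod:
  assumes "z \<in> perms (p + q)" "a \<in> perms p" "b \<in> perms q" "weak_less z (a \<otimes> b)"
  obtains z1 z2 where "z1 \<in> perms p" "z2 \<in> perms q" "z = z1 \<otimes> z2"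
  using weak_le_perm_prod_imp_split[OF assms(1-3)] assms(4)
    restrict_values_perms[OF assms(1), of 0 p] restrict_values_perms[OF assms(1), of p "p + q"]
  by (auto simp: weak_less_def)

lemma covers_perm_prod_left_iff:
  assumes a: "a \<in> perms p" and b: "b \<in> perms q" and a': "a' \<in> perms p"
  shows "covers (a' \<otimes> b) (a \<otimes> b) \<longleftrightarrow> covers a' a"
proof -
  have "(\<exists>z\<in>perms (p + q). weak_less (a' \<otimes> b) z \<and> weak_less z (a \<otimes> b)) \<longleftrightarrow>
      (\<exists>z\<in>perms p. weak_less a' z \<and> weak_less z a)"
  proof
    assume "\<exists>z\<in>perms (p + q). weak_less (a' \<otimes> b) z \<and> weak_less z (a \<otimes> b)"
    then obtain z1 z2 where z: "z1 \<in> perms p" "z2 \<in> perms q"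
      "weak_less (a' \<otimes> b) (z1 \<otimes> z2)" "weak_less (z1 \<otimes> z2) (a \<otimes> b)"
      using weak_less_perm_prod_imp_perm_prod[OF _ a b] by metis
    then have "weak_less a' z1" "weak_less z1 a"
      using weak_less_perm_prod_iff[OF a' b z(1,2)] weak_less_perm_prod_iff[OF z(1,2) a b]
        weak_le_antisym[OF z(2) b] by (auto simp: weak_less_def)
    then show "\<exists>z\<in>perms p. weak_less a' z \<and> weak_less z a" using z(1) by blast
  next
    assume "\<exists>z\<in>perms p. weak_less a' z \<and> weak_less z a"
    then show "\<exists>z\<in>perms (p + q). weak_less (a' \<otimes> b) z \<and> weak_less z (a \<otimes> b)"
      using weak_less_perm_prod_iff[OF a' b _ b] weak_less_perm_prod_iff[OF _ b a b] perm_prod_perms[OF _ b]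
      by (metis weak_le_refl weak_less_def)
  qed
  then show ?thesis
    unfolding covers_perms_iff[OF perm_prod_perms[OF a b]] covers_perms_iff[OF a]
      weak_less_perm_prod_iff[OF a' b a b] by (simp add: weak_less_def)
qed

lemma covers_perm_prod_right_iff:
  assumes a: "a \<in> perms p" and b: "b \<in> perms q" and b': "b' \<in> perms q"
  shows "covers (a \<otimes> b') (a \<otimes> b) \<longleftrightarrow> covers b' b"
proof -
  have "(\<exists>z\<in>perms (p + q). weak_less (a \<otimes> b') z \<and> weak_less z (a \<otimes> b)) \<longleftrightarrow>
      (\<exists>z\<in>perms q. weak_less b' z \<and> weak_less z b)"
  proof
    assume "\<exists>z\<in>perms (p + q). weak_less (a \<otimes> b') z \<and> weak_less z (a \<otimes> b)"
    then obtain z1 z2 where z: "z1 \<in> perms p" "z2 \<in> perms q"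
      "weak_less (a \<otimes> b') (z1 \<otimes> z2)" "weak_less (z1 \<otimes> z2) (a \<otimes> b)"
      using weak_less_perm_prod_imp_perm_prod[OF _ a b] by metis
    then have "weak_less b' z2" "weak_less z2 b"
      using weak_less_perm_prod_iff[OF a b' z(1,2)] weak_less_perm_prod_iff[OF z(1,2) a b]
        weak_le_antisym[OF z(1) a] by (auto simp: weak_less_def)
    then show "\<exists>z\<in>perms q. weak_less b' z \<and> weak_less z b" using z(2) by blast
  next
    assume "\<exists>z\<in>perms q. weak_less b' z \<and> weak_less z b"
    then show "\<exists>z\<in>perms (p + q). weak_less (a \<otimes> b') z \<and> weak_less z (a \<otimes> b)"
      using weak_less_perm_prod_iff[OF a b' a] weak_less_perm_prod_iff[OF a _ a b] perm_prod_perms[OF a]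
      by (metis weak_le_refl weak_less_def)
  qed
  then show ?thesis
    unfolding covers_perms_iff[OF perm_prod_perms[OF a b]] covers_perms_iff[OF b]
      weak_less_perm_prod_iff[OF a b' a b] by (simp add: weak_less_def)
qed

lemma covers_perm_prod_cases:
  assumes a: "a \<in> perms p" and b: "b \<in> perms q" and x: "x \<in> perms (p + q)"
    and cov: "covers x (a \<otimes> b)"
  shows "(\<exists>a'\<in>perms p. covers a' a \<and> x = a' \<otimes> b) \<or> (\<exists>b'\<in>perms q. covers b' b \<and> x = a \<otimes> b')"
proof -
  have lt: "weak_less x (a \<otimes> b)"
    and no: "\<not> (\<exists>z\<in>perms (p + q). weak_less x z \<and> weak_less z (a \<otimes> b))"
    using cov covers_perms_iff[OF perm_prod_perms[OF a b]] by auto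
  obtain x1 x2 where x12: "x1 \<in> perms p" "x2 \<in> perms q" "x = x1 \<otimes> x2"
    using weak_less_perm_prod_imp_perm_prod[OF x a b lt] by blast
  have le: "weak_le x1 a" "weak_le x2 b" using lt weak_less_perm_prod_iff[OF x12(1,2) a b] x12(3) by auto
  have "x1 = a \<or> x2 = b"
  proof (rule ccontr)
    assume "\<not> (x1 = a \<or> x2 = b)"
    then have "weak_less x (x1 \<otimes> b)" "weak_less (x1 \<otimes> b) (a \<otimes> b)"
      using le x12(3) weak_less_perm_prod_iff[OF x12(1,2) x12(1) b] weak_less_perm_prod_iff[OF x12(1) b a b]
      by auto
    then show False using no perm_prod_perms[OF x12(1) b] by blast
  qed
  then show ?thesis
    using cov x12 covers_perm_prod_left_iff[OF a b x12(1)] covers_perm_prod_right_iff[OF a b x12(2)] by blast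
qed

lemma covers_perm_prod_iff:
  assumes a: "a \<in> perms p" and b: "b \<in> perms q" and x: "x \<in> perms (p + q)"
  shows "covers x (a \<otimes> b) \<longleftrightarrow>
    (\<exists>a'\<in>perms p. covers a' a \<and> x = a' \<otimes> b) \<or> (\<exists>b'\<in>perms q. covers b' b \<and> x = a \<otimes> b')"
  using covers_perm_prod_cases[OF a b x] covers_perm_prod_left_iff[OF a b] covers_perm_prod_right_iff[OF a b]
  by blast

section \<open>Join-irreducible permutations\<close>

lemma card_inv_set_less:
  assumes "x \<in> perms n" "y \<in> perms n" "weak_less x y"
  shows "card (inv_set x) < card (inv_set y)"
proof (rule psubset_card_mono)
  show "finite (inv_set y)"
    using finite_subset[OF inv_set_subset_all_pairs[OF assms(2)] finite_all_pairs] .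
  show "inv_set x \<subset> inv_set y"
    using assms inv_set_inj by (auto simp: weak_less_def weak_le_def)
qed

lemma exists_cover_above:
  assumes "z \<in> perms n" "j \<in> perms n" "weak_less z j"
  shows "\<exists>x\<in>perms n. weak_le z x \<and> covers x j"
  using assms
proof (induction "card (inv_set j) - card (inv_set z)" arbitrary: z rule: less_induct)
  case less
  show ?case
  proof (cases "covers z j")
    case True
    then show ?thesis using less.prems(1) weak_le_refl by blast
  next
    case False
    then obtain w where w: "w \<in> perms n" "weak_less z w" "weak_less w j"
      using covers_perms_iff[OF less.prems(2)] less.prems(3) by blast
    have "card (inv_set j) - card (inv_set w) < card (inv_set j) - card (inv_set z)"
      using card_inv_set_less[OF less.prems(1) w(1,2)] card_inv_set_less[OF w(1) less.prems(2) w(3)]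
      by simp
    then obtain x where "x \<in> perms n" "weak_le w x" "covers x j"
      using less.hyps w(1,3) less.prems(2) by blast
    then show ?thesis using w(2) by (auto simp: weak_less_def intro: weak_le_trans)
  qed
qed

lemma join_irreducible_perms_iff:
  "g \<in> perms n \<Longrightarrow> join_irreducible g \<longleftrightarrow> (\<exists>!x. x \<in> perms n \<and> covers x g)"
  by (simp add: join_irreducible_def perms_def)

lemma join_irreducible_perms: "join_irreducible g \<Longrightarrow> g \<in> perms (length g)"
  by (simp add: join_irreducible_def)

lemma
  assumes "join_irreducible g"
  shows lower_cover_perms: "lower_cover g \<in> perms (length g)"
    and covers_lower_cover: "covers (lower_cover g) g"
  using theI'[OF assms[unfolded join_irreducible_def, THEN conjunct2]]
  unfolding lower_cover_def by blast+

lemma lower_cover_unique: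
  assumes "join_irreducible g" "x \<in> perms (length g)" "covers x g"
  shows "x = lower_cover g"
proof -
  have "\<exists>!x. x \<in> perms (length g) \<and> covers x g" using assms(1) by (simp add: join_irreducible_def)
  then show ?thesis using assms(2,3) lower_cover_perms[OF assms(1)] covers_lower_cover[OF assms(1)] by blast
qed

lemma weak_less_lower_cover: "join_irreducible g \<Longrightarrow> weak_less (lower_cover g) g"
  using covers_lower_cover by (simp add: covers_def)

lemma weak_le_lower_cover:
  assumes "join_irreducible j" "z \<in> perms (length j)" "weak_less z j"
  shows "weak_le z (lower_cover j)"
proof -
  obtain x where "x \<in> perms (length j)" "weak_le z x" "covers x j"
    using exists_cover_above[OF assms(2) join_irreducible_perms[OF assms(1)] assms(3)] by blast
  then show ?thesis using lower_cover_unique[OF assms(1)] by metis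
qed

lemma join_irreducible_ne_ident:
  assumes "join_irreducible g"
  shows "g \<noteq> ident (length g)"
proof
  assume "g = ident (length g)"
  moreover have "inv_set (lower_cover g) \<subseteq> inv_set g"
    using weak_less_lower_cover[OF assms] by (simp add: weak_less_def weak_le_def)
  ultimately have "inv_set (lower_cover g) = inv_set (ident (length g))"
    by (metis inv_set_ident subset_empty)
  then have "lower_cover g = g"
    using inv_set_inj[OF lower_cover_perms[OF assms] ident_perms] \<open>g = ident (length g)\<close> by simp
  then show False using weak_less_lower_cover[OF assms] by (simp add: weak_less_def)
qed

lemma not_covers_ident: "x \<in> perms k \<Longrightarrow> \<not> covers x (ident k)"
  using inv_set_inj[OF _ ident_perms] by (auto simp: covers_def weak_less_def weak_le_def)

lemma covers_translate_iff:
  assumes y: "y \<in> perms k" and x: "x \<in> perms (a + k + b)"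
  shows "covers x (translate a b y) \<longleftrightarrow> (\<exists>y'\<in>perms k. covers y' y \<and> x = translate a b y')"
proof -
  have ay: "ident a \<otimes> y \<in> perms (a + k)" by (rule perm_prod_perms[OF ident_perms y])
  have left: "covers x' (ident a \<otimes> y) \<longleftrightarrow> (\<exists>y'\<in>perms k. covers y' y \<and> x' = ident a \<otimes> y')"
    if "x' \<in> perms (a + k)" for x'
    using covers_perm_prod_iff[OF ident_perms y that] not_covers_ident by blast
  have "covers x (translate a b y) \<longleftrightarrow> (\<exists>x'\<in>perms (a + k). covers x' (ident a \<otimes> y) \<and> x = x' \<otimes> ident b)"
    using covers_perm_prod_iff[OF ay ident_perms x] not_covers_ident by blast
  also have "\<dots> \<longleftrightarrow> (\<exists>y'\<in>perms k. covers y' y \<and> x = translate a b y')"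
    using left perm_prod_perms[OF ident_perms] by blast
  finally show ?thesis .
qed

lemma ex1_mem_image_iff: "inj_on f S \<Longrightarrow> (\<exists>!x. x \<in> f ` S) \<longleftrightarrow> (\<exists>!y. y \<in> S)"
  unfolding inj_on_def by blast

lemma inj_on_translate: "inj_on (translate a b) (perms k)"
proof (rule inj_onI)
  fix y1 y2 assume y: "y1 \<in> perms k" "y2 \<in> perms k" "translate a b y1 = translate a b y2"
  then show "y1 = y2"
    using perm_prod_eq_iff[OF perm_prod_perms[OF ident_perms y(1)] ident_perms
        perm_prod_perms[OF ident_perms y(2)] ident_perms]
      perm_prod_eq_iff[OF ident_perms y(1) ident_perms y(2)] by simp
qed

lemma join_irreducible_translate_iff:
  assumes y: "y \<in> perms k"
  shows "join_irreducible (translate a b y) \<longleftrightarrow> join_irreducible y"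
proof -
  let ?S = "{y' \<in> perms k. covers y' y}"
  have image: "{x \<in> perms (a + k + b). covers x (translate a b y)} = translate a b ` ?S"
  proof (intro equalityI subsetI)
    fix x assume "x \<in> {x \<in> perms (a + k + b). covers x (translate a b y)}"
    then show "x \<in> translate a b ` ?S" using covers_translate_iff[OF y] by blast
  next
    fix x assume "x \<in> translate a b ` ?S"
    then obtain y' where y': "y' \<in> perms k" "covers y' y" "x = translate a b y'" by blast
    then have "x \<in> perms (a + k + b)" using translate_perms by blast
    then show "x \<in> {x \<in> perms (a + k + b). covers x (translate a b y)}"
      using covers_translate_iff[OF y] y' by blast
  qed
  have "join_irreducible (translate a b y) \<longleftrightarrow>
      (\<exists>!x. x \<in> {x \<in> perms (a + k + b). covers x (translate a b y)})"
    using join_irreducible_perms_iff[OF translate_perms[OF y]] by simp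
  also have "\<dots> \<longleftrightarrow> (\<exists>!y'. y' \<in> ?S)"
    unfolding image by (rule ex1_mem_image_iff[OF inj_on_subset[OF inj_on_translate]]) blast
  also have "\<dots> \<longleftrightarrow> join_irreducible y"
    using join_irreducible_perms_iff[OF y] by simp
  finally show ?thesis .
qed

lemma lower_cover_translate:
  assumes y: "y \<in> perms k" and J: "join_irreducible y"
  shows "lower_cover (translate a b y) = translate a b (lower_cover y)"
proof (rule lower_cover_unique[symmetric])
  show "join_irreducible (translate a b y)" using join_irreducible_translate_iff[OF y] J by simp
  have y': "lower_cover y \<in> perms k" using lower_cover_perms[OF J] y by (simp add: perms_def)
  then show "translate a b (lower_cover y) \<in> perms (length (translate a b y))"
    using translate_perms y by (simp add: perms_length)
  show "covers (translate a b (lower_cover y)) (translate a b y)"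
    using covers_translate_iff[OF y translate_perms[OF y']] covers_lower_cover[OF J] y' by blast
qed

lemma perm_hd_eq_1:
  assumes g: "g \<in> perms n" and "g \<noteq> []" and "hd g = 1"
  shows "\<exists>g'\<in>perms (n - 1). g = ident 1 \<otimes> g'"
proof -
  obtain t where t: "g = 1 # t" using assms(2,3) by (cases g) auto
  have "distinct t" "1 \<notin> set t" "length t = n - 1" "insert 1 (set t) = {1..n}"
    using g t by (auto simp: perms_def)
  have "set t = insert 1 (set t) - {1}" using \<open>1 \<notin> set t\<close> by simp
  also have "\<dots> = {2..n}" unfolding \<open>insert 1 (set t) = {1..n}\<close> by auto
  finally have "set t = {2..n}" .
  let ?g' = "map (\<lambda>i. i - 1) t"
  have "(\<lambda>i. i - 1) ` {2..n} = {1..n - 1}"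
  proof (intro equalityI subsetI)
    fix x assume "x \<in> {1..n - 1}"
    then show "x \<in> (\<lambda>i. i - 1) ` {2..n}" by (intro rev_image_eqI[of "x + 1"]) auto
  qed auto
  moreover have "inj_on (\<lambda>i. i - 1) {2..n}" by (auto simp: inj_on_def)
  ultimately have "?g' \<in> perms (n - 1)"
    using \<open>distinct t\<close> \<open>set t = {2..n}\<close> \<open>length t = n - 1\<close> by (simp add: perms_def distinct_map)
  moreover have "map (\<lambda>i. 1 + (i - 1)) t = t" using \<open>set t = {2..n}\<close> by (intro map_idI) auto
  then have "g = ident 1 \<otimes> ?g'" using t by (simp add: perm_prod_def ident_def comp_def)
  ultimately show ?thesis by blast
qed

lemma perm_last_eq_length:
  assumes g: "g \<in> perms n" and "g \<noteq> []" and "last g = n"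
  shows "\<exists>g'\<in>perms (n - 1). g = g' \<otimes> ident 1"
proof -
  obtain t where t: "g = t @ [n]" using assms(2,3) by (metis append_butlast_last_id)
  have "distinct t" "n \<notin> set t" "length t = n - 1" "insert n (set t) = {1..n}"
    using g t by (auto simp: perms_def)
  have "set t = insert n (set t) - {n}" using \<open>n \<notin> set t\<close> by simp
  also have "\<dots> = {1..n - 1}" unfolding \<open>insert n (set t) = {1..n}\<close> by auto
  finally have "t \<in> perms (n - 1)" using \<open>distinct t\<close> \<open>length t = n - 1\<close> by (simp add: perms_def)
  moreover have "g = t \<otimes> ident 1"
    using t \<open>t \<in> perms (n - 1)\<close> g by (auto simp: perm_prod_def ident_def perms_def)
  ultimately show ?thesis by blast
qed

lemma join_irreducible_translate_of_untranslated:
  "join_irreducible g \<Longrightarrow> \<exists>a b y. g = translate a b y \<and> join_irreducible y \<and> untranslated y"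
proof (induction "length g" arbitrary: g rule: less_induct)
  case less
  have g: "g \<in> perms (length g)" using join_irreducible_perms[OF less.prems] .
  show ?case
  proof (cases "untranslated g")
    case True
    then show ?thesis using less.prems by (intro exI[of _ 0] exI[of _ 0] exI[of _ g]) simp
  next
    case False
    have "g \<noteq> []" using join_irreducible_ne_ident[OF less.prems] by auto
    then have "hd g \<in> {1..length g}" "last g \<in> {1..length g}" using g by (auto simp: perms_def)
    then have "hd g = 1 \<or> last g = length g" using False \<open>g \<noteq> []\<close> by (auto simp: untranslated_def)
    then obtain a b g' where g': "g' \<in> perms (length g - 1)" "g = translate a b g'"
    proof
      assume "hd g = 1"
      then obtain g' where "g' \<in> perms (length g - 1)" "g = ident 1 \<otimes> g'"
        using perm_hd_eq_1[OF g \<open>g \<noteq> []\<close>] by blast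
      then show thesis using that[of g' 1 0] by simp
    next
      assume "last g = length g"
      then obtain g' where "g' \<in> perms (length g - 1)" "g = g' \<otimes> ident 1"
        using perm_last_eq_length[OF g \<open>g \<noteq> []\<close>] by blast
      then show thesis using that[of g' 0 1] by simp
    qed
    have "join_irreducible g'" using join_irreducible_translate_iff[OF g'(1)] less.prems g'(2) by simp
    moreover have "length g' < length g" using g'(1) \<open>g \<noteq> []\<close> by (simp add: perms_length)
    ultimately obtain c d y where y: "g' = translate c d y" "join_irreducible y" "untranslated y"
      using less.hyps by blast
    then have "g = translate (a + c) (d + b) y" using g'(2) by (simp add: translate_translate)
    then show ?thesis using y by blast
  qed
qed

lemma ident_weak_less: "x \<in> perms n \<Longrightarrow> x \<noteq> ident n \<Longrightarrow> weak_less (ident n) x"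
  by (simp add: weak_less_def ident_weak_le)

lemma not_join_irreducible_perm_prod:
  assumes u: "u \<in> perms p" and v: "v \<in> perms q" and "u \<noteq> ident p" "v \<noteq> ident q"
  shows "\<not> join_irreducible (u \<otimes> v)"
proof
  assume J: "join_irreducible (u \<otimes> v)"
  obtain u' where u': "u' \<in> perms p" "covers u' u"
    using exists_cover_above[OF ident_perms u ident_weak_less[OF u \<open>u \<noteq> ident p\<close>]] by blast
  obtain v' where v': "v' \<in> perms q" "covers v' v"
    using exists_cover_above[OF ident_perms v ident_weak_less[OF v \<open>v \<noteq> ident q\<close>]] by blast
  have len: "length (u \<otimes> v) = p + q" using perms_length[OF perm_prod_perms[OF u v]] .
  have "covers (u' \<otimes> v) (u \<otimes> v)" "covers (u \<otimes> v') (u \<otimes> v)"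
    using covers_perm_prod_iff[OF u v perm_prod_perms[OF u'(1) v]]
      covers_perm_prod_iff[OF u v perm_prod_perms[OF u v'(1)]] u' v' by blast+
  moreover have "u' \<otimes> v \<in> perms (length (u \<otimes> v))" "u \<otimes> v' \<in> perms (length (u \<otimes> v))"
    using perm_prod_perms[OF u'(1) v] perm_prod_perms[OF u v'(1)] len by simp_all
  ultimately have "u' \<otimes> v = u \<otimes> v'" using lower_cover_unique[OF J] by metis
  then have "u' = u" using perm_prod_eq_iff[OF u'(1) v u v'(1)] by simp
  then show False using u'(2) by (simp add: covers_def weak_less_def)
qed

lemma untranslated_perm_prod_ne_ident:
  assumes "u \<in> perms p" "v \<in> perms q" "0 < p" "0 < q" "untranslated (u \<otimes> v)"
  shows "u \<noteq> ident p" "v \<noteq> ident q"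
proof -
  show "u \<noteq> ident p"
  proof
    assume "u = ident p"
    then have "hd (u \<otimes> v) = 1" using \<open>0 < p\<close> by (simp add: perm_prod_def ident_def upt_rec)
    then show False using assms(5) by (simp add: untranslated_def)
  qed
  show "v \<noteq> ident q"
  proof
    assume "v = ident q"
    then have "last (u \<otimes> v) = length (u \<otimes> v)"
      using \<open>0 < q\<close> assms(1) by (simp add: perm_prod_def ident_def perms_length)
    then show False using assms(5) by (simp add: untranslated_def)
  qed
qed

lemma untranslated_inv_set_diff_lower_cover_straddles:
  assumes y: "y \<in> perms k" and J: "join_irreducible y" and U: "untranslated y"
    and c: "0 < c" "c < k" and ab: "(a, b) \<in> inv_set y - inv_set (lower_cover y)"
  shows "a \<le> c \<and> c < b"
proof -
  let ?u = "restrict_values 0 c y" and ?v = "restrict_values c k y"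
  have u: "?u \<in> perms c" and v: "?v \<in> perms (k - c)"
    using restrict_values_perms[OF y, of 0 c] restrict_values_perms[OF y, of c k] by simp_all
  have z: "?u \<otimes> ?v \<in> perms k" using perm_prod_perms[OF u v] c by simp
  have inv: "inv_set (?u \<otimes> ?v) = {(a, b) \<in> inv_set y. b \<le> c \<or> c < a}"
    using inv_set_restrict_values_split[OF y] c by simp
  have "?u \<otimes> ?v \<noteq> y"
    using not_join_irreducible_perm_prod[OF u v] untranslated_perm_prod_ne_ident[OF u v] J U c by auto
  then have "weak_less (?u \<otimes> ?v) y" using inv by (auto simp: weak_less_def weak_le_def)
  then have "inv_set (?u \<otimes> ?v) \<subseteq> inv_set (lower_cover y)"
    using weak_le_lower_cover[OF J] z y by (simp add: weak_le_def perms_length)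
  then show ?thesis using ab inv by auto
qed

lemma untranslated_inv_set_diff_lower_cover:
  assumes y: "y \<in> perms k" and J: "join_irreducible y" and U: "untranslated y"
  shows "inv_set y - inv_set (lower_cover y) \<subseteq> {(1, k)}"
proof (clarify)
  fix a b assume ab: "(a, b) \<in> inv_set y" "(a, b) \<notin> inv_set (lower_cover y)"
  then have range: "1 \<le> a" "a < b" "b \<le> k" using inv_set_memD[OF y] by blast+
  have "b = k"
    using untranslated_inv_set_diff_lower_cover_straddles[OF y J U, of b a b] ab range by force
  moreover have "a = 1"
    using untranslated_inv_set_diff_lower_cover_straddles[OF y J U, of "a - 1" a b] ab range by force
  ultimately show "a = 1 \<and> b = k" by simp
qed

section \<open>Lattice congruences\<close>

lemma lattice_cong_perms: "lattice_cong n \<Theta> \<Longrightarrow> (x, y) \<in> \<Theta> \<Longrightarrow> x \<in> perms n \<and> y \<in> perms n"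
  unfolding lattice_cong_def equiv_def refl_on_def by blast

lemma lattice_cong_refl: "lattice_cong n \<Theta> \<Longrightarrow> x \<in> perms n \<Longrightarrow> (x, x) \<in> \<Theta>"
  unfolding lattice_cong_def equiv_def refl_on_def by blast

lemma lattice_cong_sym: "lattice_cong n \<Theta> \<Longrightarrow> (x, y) \<in> \<Theta> \<Longrightarrow> (y, x) \<in> \<Theta>"
  unfolding lattice_cong_def equiv_def by (blast dest: symD)

lemma lattice_cong_trans: "lattice_cong n \<Theta> \<Longrightarrow> (x, y) \<in> \<Theta> \<Longrightarrow> (y, z) \<in> \<Theta> \<Longrightarrow> (x, z) \<in> \<Theta>"
  unfolding lattice_cong_def equiv_def by (blast dest: transD)

lemma
  assumes "lattice_cong n \<Theta>" "(x, y) \<in> \<Theta>" "z \<in> perms n"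
  shows lattice_cong_wjoin: "(wjoin n x z, wjoin n y z) \<in> \<Theta>"
    and lattice_cong_wmeet: "(wmeet n x z, wmeet n y z) \<in> \<Theta>"
  using assms lattice_cong_perms[OF assms(1,2)] unfolding lattice_cong_def by blast+

lemma lattice_congI:
  assumes "\<Theta> \<subseteq> perms n \<times> perms n"
    and "\<And>x. x \<in> perms n \<Longrightarrow> (x, x) \<in> \<Theta>"
    and "\<And>x y. (x, y) \<in> \<Theta> \<Longrightarrow> (y, x) \<in> \<Theta>"
    and "\<And>x y z. (x, y) \<in> \<Theta> \<Longrightarrow> (y, z) \<in> \<Theta> \<Longrightarrow> (x, z) \<in> \<Theta>"
    and "\<And>x y z. (x, y) \<in> \<Theta> \<Longrightarrow> z \<in> perms n \<Longrightarrow> (wjoin n x z, wjoin n y z) \<in> \<Theta>"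
    and "\<And>x y z. (x, y) \<in> \<Theta> \<Longrightarrow> z \<in> perms n \<Longrightarrow> (wmeet n x z, wmeet n y z) \<in> \<Theta>"
  shows "lattice_cong n \<Theta>"
  unfolding lattice_cong_def equiv_def refl_on_def
proof (intro conjI ballI impI)
  show "\<Theta> \<subseteq> perms n \<times> perms n" by fact
  show "sym \<Theta>" using assms(3) by (rule symI)
  show "trans \<Theta>" using assms(4) by (rule transI)
qed (use assms(2,5,6) in blast)+

lemma lattice_cong_Inter:
  assumes "F \<noteq> {}" and F: "\<And>\<Theta>. \<Theta> \<in> F \<Longrightarrow> lattice_cong n \<Theta>"
  shows "lattice_cong n (\<Inter>F)"
proof (rule lattice_congI)
  show "\<Inter>F \<subseteq> perms n \<times> perms n" using assms lattice_cong_perms by fast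
  show "(x, x) \<in> \<Inter>F" if "x \<in> perms n" for x using F lattice_cong_refl that by fast
  show "(y, x) \<in> \<Inter>F" if "(x, y) \<in> \<Inter>F" for x y using F lattice_cong_sym that by fast
  show "(x, z) \<in> \<Inter>F" if "(x, y) \<in> \<Inter>F" "(y, z) \<in> \<Inter>F" for x y z
    using F lattice_cong_trans that by fast
  show "(wjoin n x z, wjoin n y z) \<in> \<Inter>F" if "(x, y) \<in> \<Inter>F" "z \<in> perms n" for x y z
    using F lattice_cong_wjoin that by fast
  show "(wmeet n x z, wmeet n y z) \<in> \<Inter>F" if "(x, y) \<in> \<Inter>F" "z \<in> perms n" for x y z
    using F lattice_cong_wmeet that by fast
qed

lemma lattice_cong_preimage:
  assumes \<Theta>: "lattice_cong n \<Theta>"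
    and f: "\<And>x. x \<in> perms m \<Longrightarrow> f x \<in> perms n"
    and join: "\<And>x y. x \<in> perms m \<Longrightarrow> y \<in> perms m \<Longrightarrow> f (wjoin m x y) = wjoin n (f x) (f y)"
    and meet: "\<And>x y. x \<in> perms m \<Longrightarrow> y \<in> perms m \<Longrightarrow> f (wmeet m x y) = wmeet n (f x) (f y)"
  shows "lattice_cong m {(x, y). x \<in> perms m \<and> y \<in> perms m \<and> (f x, f y) \<in> \<Theta>}"
    (is "lattice_cong m ?P")
proof (rule lattice_congI)
  show "?P \<subseteq> perms m \<times> perms m" by blast
  show "(x, x) \<in> ?P" if "x \<in> perms m" for x using lattice_cong_refl[OF \<Theta> f] that by blast
  show "(y, x) \<in> ?P" if "(x, y) \<in> ?P" for x y using lattice_cong_sym[OF \<Theta>] that by blast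
  show "(x, z) \<in> ?P" if "(x, y) \<in> ?P" "(y, z) \<in> ?P" for x y z
    using lattice_cong_trans[OF \<Theta>] that by blast
  show "(wjoin m x z, wjoin m y z) \<in> ?P" if "(x, y) \<in> ?P" "z \<in> perms m" for x y z
    using lattice_cong_wjoin[OF \<Theta> _ f[OF that(2)]] that join wjoin_perms by auto
  show "(wmeet m x z, wmeet m y z) \<in> ?P" if "(x, y) \<in> ?P" "z \<in> perms m" for x y z
    using lattice_cong_wmeet[OF \<Theta> _ f[OF that(2)]] that meet wmeet_perms by auto
qed

lemma exists_minimal_not_below:
  assumes a: "a \<in> perms n" and b: "b \<in> perms n" and "weak_le a b" "a \<noteq> b"
  shows "\<exists>j\<in>perms n. weak_le j b \<and> \<not> weak_le j a \<and> (\<forall>z\<in>perms n. weak_less z j \<longrightarrow> weak_le z a)"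
proof -
  let ?S = "\<lambda>j. j \<in> perms n \<and> weak_le j b \<and> \<not> weak_le j a"
  have "?S b" using assms weak_le_antisym by auto
  then obtain j where j: "?S j" and least: "\<And>z. ?S z \<Longrightarrow> card (inv_set j) \<le> card (inv_set z)"
    using ex_has_least_nat[of ?S b "\<lambda>w. card (inv_set w)"] by blast
  have "weak_le z a" if z: "z \<in> perms n" "weak_less z j" for z
  proof (rule ccontr)
    assume "\<not> weak_le z a"
    then have "?S z" using z j by (auto simp: weak_less_def intro: weak_le_trans)
    then show False using least card_inv_set_less[OF z(1) _ z(2)] j by fastforce
  qed
  then show ?thesis using j by blast
qed

lemma join_irreducible_if_minimal_not_below:
  assumes a: "a \<in> perms n" and j: "j \<in> perms n" and "\<not> weak_le j a"
    and below: "\<And>z. z \<in> perms n \<Longrightarrow> weak_less z j \<Longrightarrow> weak_le z a"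
  shows "join_irreducible j" "weak_le (lower_cover j) a"
proof -
  have "j \<noteq> ident n" using \<open>\<not> weak_le j a\<close> ident_weak_le by metis
  then obtain x where x: "x \<in> perms n" "covers x j"
    using exists_cover_above[OF ident_perms j ident_weak_less[OF j]] by blast
  have "x1 = x2" if x1: "x1 \<in> perms n" "covers x1 j" and x2: "x2 \<in> perms n" "covers x2 j" for x1 x2
  proof -
    text \<open>Both covers lie below \<open>a\<close>, so their join is below \<open>a\<close> and hence strictly below \<open>j\<close>.\<close>
    let ?m = "wjoin n x1 x2"
    have lt: "weak_less x1 j" "weak_less x2 j" using x1 x2 by (simp_all add: covers_def)
    have "weak_le ?m j" "weak_le ?m a"
      using wjoin_least[OF x1(1) x2(1)] j a lt below x1(1) x2(1) by (auto simp: weak_less_def)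
    then have "weak_less ?m j" using \<open>\<not> weak_le j a\<close> by (auto simp: weak_less_def)
    then have "?m = x1" "?m = x2"
      using x1 x2 wjoin_upper[OF x1(1) x2(1)] wjoin_perms[OF x1(1) x2(1)] covers_perms_iff[OF j]
      by (metis weak_less_def)+
    then show "x1 = x2" by simp
  qed
  then show J: "join_irreducible j" using join_irreducible_perms_iff[OF j] x by blast
  show "weak_le (lower_cover j) a"
    using below lower_cover_perms[OF J] weak_less_lower_cover[OF J] perms_length[OF j] by simp
qed

lemma lattice_cong_contracts_join_irreducible_between:
  assumes \<Theta>: "lattice_cong n \<Theta>" and ab: "(a, b) \<in> \<Theta>"
    and J: "join_irreducible j" and j: "j \<in> perms n"
    and "weak_le j b" "\<not> weak_le j a" "weak_le (lower_cover j) a"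
  shows "contracts \<Theta> j"
proof -
  have a: "a \<in> perms n" and b: "b \<in> perms n" using lattice_cong_perms[OF \<Theta> ab] by auto
  have j': "lower_cover j \<in> perms n" using lower_cover_perms[OF J] perms_length[OF j] by simp
  let ?m = "wmeet n a j"
  have m: "?m \<in> perms n" by (rule wmeet_perms[OF a j])
  have "(?m, wmeet n b j) \<in> \<Theta>" by (rule lattice_cong_wmeet[OF \<Theta> ab j])
  then have mj: "(?m, j) \<in> \<Theta>" using wmeet_absorb(2)[OF j b \<open>weak_le j b\<close>] by simp
  have "weak_less ?m j"
    using wmeet_lower[OF a j] \<open>\<not> weak_le j a\<close> by (auto simp: weak_less_def)
  then have "weak_le ?m (lower_cover j)" using weak_le_lower_cover[OF J] m perms_length[OF j] by simp
  have "(wjoin n ?m (lower_cover j), wjoin n j (lower_cover j)) \<in> \<Theta>"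
    by (rule lattice_cong_wjoin[OF \<Theta> mj j'])
  then have "(lower_cover j, j) \<in> \<Theta>"
    using wjoin_absorb(1)[OF m j' \<open>weak_le ?m (lower_cover j)\<close>]
      wjoin_absorb(2)[OF j' j] weak_less_lower_cover[OF J] by (simp add: weak_less_def)
  then show ?thesis unfolding contracts_def by (rule lattice_cong_sym[OF \<Theta>])
qed

lemma lattice_cong_contracts_step:
  assumes \<Theta>: "lattice_cong n \<Theta>" and \<Psi>: "lattice_cong n \<Psi>"
    and contr: "\<And>g. g \<in> perms n \<Longrightarrow> join_irreducible g \<Longrightarrow> contracts \<Theta> g \<Longrightarrow> contracts \<Psi> g"
    and ab: "(a, b) \<in> \<Theta>" "weak_le a b" "a \<noteq> b"
  shows "\<exists>a'\<in>perms n. weak_less a a' \<and> weak_le a' b \<and> (a', b) \<in> \<Theta> \<and> (a, a') \<in> \<Psi>"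
proof -
  have a: "a \<in> perms n" and b: "b \<in> perms n" using lattice_cong_perms[OF \<Theta> ab(1)] by auto
  obtain j where j: "j \<in> perms n" "weak_le j b" "\<not> weak_le j a"
    and below: "\<forall>z\<in>perms n. weak_less z j \<longrightarrow> weak_le z a"
    using exists_minimal_not_below[OF a b ab(2,3)] by blast
  have J: "join_irreducible j" and j_a: "weak_le (lower_cover j) a"
    using join_irreducible_if_minimal_not_below[OF a j(1,3)] below by blast+
  have j': "lower_cover j \<in> perms n" using lower_cover_perms[OF J] perms_length[OF j(1)] by simp
  have "contracts \<Psi> j"
    using contr[OF j(1) J lattice_cong_contracts_join_irreducible_between[OF \<Theta> ab(1) J j]] j_a .
  text \<open>Contracting \<open>j\<close> collapses \<open>a\<close> with \<open>a \<squnion> j\<close>, which is strictly closer to \<open>b\<close>.\<close>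
  let ?a' = "wjoin n j a"
  have a': "?a' \<in> perms n" by (rule wjoin_perms[OF j(1) a])
  have "(?a', wjoin n (lower_cover j) a) \<in> \<Psi>"
    using lattice_cong_wjoin[OF \<Psi> \<open>contracts \<Psi> j\<close>[unfolded contracts_def] a] .
  then have "(a, ?a') \<in> \<Psi>" using wjoin_absorb(1)[OF j' a j_a] lattice_cong_sym[OF \<Psi>] by simp
  moreover have le: "weak_le a ?a'" "weak_le j ?a'" using wjoin_upper[OF j(1) a] by auto
  moreover have a'b: "weak_le ?a' b" using wjoin_least[OF j(1) a b j(2) ab(2)] .
  moreover have "(wjoin n a ?a', wjoin n b ?a') \<in> \<Theta>" by (rule lattice_cong_wjoin[OF \<Theta> ab(1) a'])
  then have "(?a', b) \<in> \<Theta>" using wjoin_absorb(1)[OF a a' le(1)] wjoin_absorb(2)[OF a' b a'b] by simp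
  moreover have "?a' \<noteq> a" using le(2) j(3) by auto
  ultimately show ?thesis using a' by (auto simp: weak_less_def)
qed

lemma lattice_cong_subset_if_contracts_le:
  assumes \<Theta>: "lattice_cong n \<Theta>" and \<Psi>: "lattice_cong n \<Psi>"
    and contr: "\<And>g. g \<in> perms n \<Longrightarrow> join_irreducible g \<Longrightarrow> contracts \<Theta> g \<Longrightarrow> contracts \<Psi> g"
    and "(a, b) \<in> \<Theta>" "weak_le a b"
  shows "(a, b) \<in> \<Psi>"
  using assms(4,5)
proof (induction "card (inv_set b - inv_set a)" arbitrary: a rule: less_induct)
  case less
  have a: "a \<in> perms n" and b: "b \<in> perms n" using lattice_cong_perms[OF \<Theta> less.prems(1)] by auto
  show ?case
  proof (cases "a = b")
    case True
    then show ?thesis using lattice_cong_refl[OF \<Psi> a] by simp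
  next
    case False
    then obtain a' where a': "a' \<in> perms n" "weak_less a a'" "weak_le a' b" "(a', b) \<in> \<Theta>" "(a, a') \<in> \<Psi>"
      using lattice_cong_contracts_step[OF \<Theta> \<Psi> contr less.prems] by blast
    have "inv_set b - inv_set a' \<subset> inv_set b - inv_set a"
      using a' inv_set_inj[OF a a'(1)] by (auto simp: weak_less_def weak_le_def)
    then have "card (inv_set b - inv_set a') < card (inv_set b - inv_set a)"
      using finite_subset[OF inv_set_subset_all_pairs[OF b] finite_all_pairs] by (intro psubset_card_mono) auto
    then have "(a', b) \<in> \<Psi>" using less.hyps a'(3,4) by blast
    then show ?thesis using lattice_cong_trans[OF \<Psi> a'(5)] by blast
  qed
qed

lemma lattice_cong_subset_if_contracts:
  assumes \<Theta>: "lattice_cong n \<Theta>" and \<Psi>: "lattice_cong n \<Psi>"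
    and contr: "\<And>g. g \<in> perms n \<Longrightarrow> join_irreducible g \<Longrightarrow> contracts \<Theta> g \<Longrightarrow> contracts \<Psi> g"
  shows "\<Theta> \<subseteq> \<Psi>"
proof (clarify)
  fix x y assume xy: "(x, y) \<in> \<Theta>"
  have x: "x \<in> perms n" and y: "y \<in> perms n" using lattice_cong_perms[OF \<Theta> xy] by auto
  let ?m = "wmeet n x y"
  have "(wmeet n x x, wmeet n y x) \<in> \<Theta>" "(wmeet n x y, wmeet n y y) \<in> \<Theta>"
    using lattice_cong_wmeet[OF \<Theta> xy x] lattice_cong_wmeet[OF \<Theta> xy y] by auto
  then have "(?m, x) \<in> \<Theta>" "(?m, y) \<in> \<Theta>"
    using wmeet_absorb[OF x x weak_le_refl] wmeet_absorb[OF y y weak_le_refl] wmeet_commute[OF x y]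
      lattice_cong_sym[OF \<Theta>] by auto
  then have "(?m, x) \<in> \<Psi>" "(?m, y) \<in> \<Psi>"
    using lattice_cong_subset_if_contracts_le[OF \<Theta> \<Psi> contr] wmeet_lower[OF x y] by auto
  then show "(x, y) \<in> \<Psi>" using lattice_cong_trans[OF \<Psi> lattice_cong_sym[OF \<Psi>]] by blast
qed

section \<open>Translational families\<close>

lemma lattice_cong_full: "lattice_cong n (perms n \<times> perms n)"
  by (rule lattice_congI) (auto simp: wjoin_perms wmeet_perms)

lemma lattice_cong_Tr: "lattice_cong n (Tr C n)"
  unfolding Tr_def
proof (rule lattice_cong_Inter)
  have "contracts (perms n \<times> perms n) g" if "g \<in> perms n" "join_irreducible g" for g
    using that lower_cover_perms[OF that(2)] by (simp add: contracts_def perms_length)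
  then show "{\<Theta>. lattice_cong n \<Theta> \<and>
      (\<forall>g\<in>perms n. join_irreducible g \<and> (\<exists>y\<in>C. is_translate g y) \<longrightarrow> contracts \<Theta> g)} \<noteq> {}"
    using lattice_cong_full by blast
qed blast

lemma Tr_contracts:
  "g \<in> perms n \<Longrightarrow> join_irreducible g \<Longrightarrow> y \<in> C \<Longrightarrow> is_translate g y \<Longrightarrow> contracts (Tr C n) g"
  unfolding Tr_def contracts_def by blast

lemma Tr_least:
  assumes "lattice_cong n \<Theta>"
    and "\<And>g y. g \<in> perms n \<Longrightarrow> join_irreducible g \<Longrightarrow> y \<in> C \<Longrightarrow> is_translate g y \<Longrightarrow> contracts \<Theta> g"
  shows "Tr C n \<subseteq> \<Theta>"
  unfolding Tr_def using assms by blast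

lemma Tr_translate:
  assumes "(u, u') \<in> Tr C k"
  shows "(translate a b u, translate a b u') \<in> Tr C (a + k + b)"
proof -
  let ?P = "{(x, y). x \<in> perms k \<and> y \<in> perms k \<and> (translate a b x, translate a b y) \<in> Tr C (a + k + b)}"
  have "lattice_cong k ?P"
  proof (rule lattice_cong_preimage[OF lattice_cong_Tr])
    show "translate a b x \<in> perms (a + k + b)" if "x \<in> perms k" for x
      by (rule translate_perms[OF that])
    show "translate a b (wjoin k x y) = wjoin (a + k + b) (translate a b x) (translate a b y)"
      if "x \<in> perms k" "y \<in> perms k" for x y
      using that by (simp add: wjoin_perm_prod perm_prod_perms ident_perms wjoin_perms wjoin_absorb)
    show "translate a b (wmeet k x y) = wmeet (a + k + b) (translate a b x) (translate a b y)"
      if "x \<in> perms k" "y \<in> perms k" for x y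
      using that by (simp add: wmeet_perm_prod perm_prod_perms ident_perms wmeet_perms wmeet_absorb)
  qed
  moreover have "contracts ?P g"
    if g: "g \<in> perms k" "join_irreducible g" "y \<in> C" "is_translate g y" for g y
  proof -
    obtain c d where "g = translate c d y" using g(4) by (auto simp: is_translate_def)
    then have "is_translate (translate a b g) y"
      unfolding is_translate_def using translate_translate by blast
    moreover have "join_irreducible (translate a b g)"
      using join_irreducible_translate_iff[OF g(1)] g(2) by simp
    ultimately show ?thesis
      using Tr_contracts[OF translate_perms[OF g(1)] _ g(3)] lower_cover_translate[OF g(1,2)]
        lower_cover_perms[OF g(2)] g(1) by (simp add: contracts_def perms_length)
  qed
  ultimately have "Tr C k \<subseteq> ?P" by (rule Tr_least)
  then show ?thesis using assms by blast
qed

lemma Tr_contracts_translate: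
  assumes "y \<in> C" "y \<in> perms k" "join_irreducible y"
  shows "(translate a b y, translate a b (lower_cover y)) \<in> Tr C (a + k + b)"
  using Tr_contracts[OF translate_perms[OF assms(2)] _ assms(1)] assms(2,3)
    join_irreducible_translate_iff lower_cover_translate
  by (auto simp: contracts_def is_translate_def)

lemma restrict_values_eq_if_inv_set_diff_straddles:
  assumes x: "x \<in> perms n" and y: "y \<in> perms n"
    and "inv_set y \<subseteq> inv_set x" "inv_set x - inv_set y \<subseteq> {(s, t)}" "\<not> (l < s \<and> t \<le> m)"
  shows "restrict_values l m x = restrict_values l m y"
proof (rule inv_set_inj[OF restrict_values_perms[OF x] restrict_values_perms[OF y]])
  show "inv_set (restrict_values l m x) = inv_set (restrict_values l m y)"
    unfolding inv_set_restrict_values[OF x] inv_set_restrict_values[OF y]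
    using assms(3-5) by (fastforce simp: restrict_pairs_def all_pairs_def)
qed

lemma restrict_values_translate_straddling:
  assumes y: "y \<in> perms k" and J: "join_irreducible y" and U: "untranslated y"
    and "a < p" "p < a + k" "a + k + b = p + q"
  shows "restrict_values 0 p (translate a b y) = restrict_values 0 p (translate a b (lower_cover y))"
    "restrict_values p (p + q) (translate a b y) = restrict_values p (p + q) (translate a b (lower_cover y))"
proof -
  have y': "lower_cover y \<in> perms k" using lower_cover_perms[OF J] perms_length[OF y] by simp
  have g: "translate a b y \<in> perms (p + q)" "translate a b (lower_cover y) \<in> perms (p + q)"
    using translate_perms[OF y, of a b] translate_perms[OF y', of a b] \<open>a + k + b = p + q\<close> by simp_all
  have "inv_set (translate a b y) - inv_set (translate a b (lower_cover y)) \<subseteq> {(a + 1, a + k)}"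
    using untranslated_inv_set_diff_lower_cover[OF y J U]
    unfolding inv_set_translate[OF y] inv_set_translate[OF y'] by (auto simp: mem_shift_pairs)
  moreover have "inv_set (translate a b (lower_cover y)) \<subseteq> inv_set (translate a b y)"
    using weak_less_lower_cover[OF J] unfolding inv_set_translate[OF y] inv_set_translate[OF y']
    by (auto simp: weak_less_def weak_le_def shift_pairs_def)
  ultimately show "restrict_values 0 p (translate a b y) = restrict_values 0 p (translate a b (lower_cover y))"
    "restrict_values p (p + q) (translate a b y) = restrict_values p (p + q) (translate a b (lower_cover y))"
    using restrict_values_eq_if_inv_set_diff_straddles[OF g] \<open>a < p\<close> \<open>p < a + k\<close> by auto
qed

lemma restrict_values_translate_left:
  assumes "y \<in> perms k" "a + k + c = p"
  shows "restrict_values 0 p (translate a (c + q) y) = translate a c y"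
    "restrict_values p (p + q) (translate a (c + q) y) = ident q"
  using restrict_values_perm_prod[OF translate_perms[OF assms(1), of a c] ident_perms, of q] assms(2)
    translate_translate[where a = 0 and b = q and c = a and d = c] by simp_all

lemma restrict_values_translate_right:
  assumes "y \<in> perms k" "c + k + b = q"
  shows "restrict_values 0 p (translate (p + c) b y) = ident p"
    "restrict_values p (p + q) (translate (p + c) b y) = translate c b y"
  using restrict_values_perm_prod[OF ident_perms translate_perms[OF assms(1), of c b], of p] assms(2)
    translate_translate[where a = p and b = 0 and c = c and d = b] by simp_all

lemma Tr_restrict_values_translate:
  assumes C: "\<forall>y\<in>C. join_irreducible y \<and> untranslated y" and "y \<in> C" and y: "y \<in> perms k"
    and len: "a + k + b = p + q"
  shows "(restrict_values 0 p (translate a b y), restrict_values 0 p (translate a b (lower_cover y))) \<in> Tr C p \<and>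
    (restrict_values p (p + q) (translate a b y), restrict_values p (p + q) (translate a b (lower_cover y)))
      \<in> Tr C q"
proof -
  have J: "join_irreducible y" and U: "untranslated y" using C \<open>y \<in> C\<close> by auto
  have y': "lower_cover y \<in> perms k" using lower_cover_perms[OF J] perms_length[OF y] by simp
  note refl = lattice_cong_refl[OF lattice_cong_Tr]
  consider "a + k \<le> p" | "p \<le> a" | "a < p \<and> p < a + k" by linarith
  then show ?thesis
  proof cases
    case 1
    then obtain c where "a + k + c = p" "b = c + q" using len by (metis le_add_diff_inverse add.assoc add_left_cancel)
    then show ?thesis
      using restrict_values_translate_left[OF y] restrict_values_translate_left[OF y']
        Tr_contracts_translate[OF \<open>y \<in> C\<close> y J, of a c] refl[OF ident_perms] by simp
  next
    case 2
    then obtain c where "c + k + b = q" "a = p + c" using len by (metis le_add_diff_inverse add.assoc add_left_cancel)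
    then show ?thesis
      using restrict_values_translate_right[OF y] restrict_values_translate_right[OF y']
        Tr_contracts_translate[OF \<open>y \<in> C\<close> y J, of c b] refl[OF ident_perms] by simp
  next
    case 3
    have g: "translate a b y \<in> perms (p + q)" using translate_perms[OF y, of a b] len by simp
    show ?thesis
      using restrict_values_translate_straddling[OF y J U _ _ len] 3
        refl[OF restrict_values_perms[OF g, of 0 p]] refl[OF restrict_values_perms[OF g, of p "p + q"]] by simp
  qed
qed

lemma Tr_restrict_values:
  assumes C: "\<forall>y\<in>C. join_irreducible y \<and> untranslated y" and xy: "(x, y) \<in> Tr C (p + q)"
  shows "(restrict_values 0 p x, restrict_values 0 p y) \<in> Tr C p"
    "(restrict_values p (p + q) x, restrict_values p (p + q) y) \<in> Tr C q"
proof -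
  let ?l = "restrict_values 0 p" and ?r = "restrict_values p (p + q)"
  let ?L = "{(x, y). x \<in> perms (p + q) \<and> y \<in> perms (p + q) \<and> (?l x, ?l y) \<in> Tr C p}"
  let ?R = "{(x, y). x \<in> perms (p + q) \<and> y \<in> perms (p + q) \<and> (?r x, ?r y) \<in> Tr C q}"
  have "lattice_cong (p + q) ?L"
    using restrict_values_perms[of _ "p + q" 0 p] restrict_values_wjoin[of _ "p + q" _ 0 p]
      restrict_values_wmeet[of _ "p + q" _ p 0]
    by (intro lattice_cong_preimage[OF lattice_cong_Tr]) simp_all
  moreover have "lattice_cong (p + q) ?R"
    using restrict_values_perms[of _ "p + q" p "p + q"] restrict_values_wjoin[of _ "p + q" _ p "p + q"]
      restrict_values_wmeet[of _ "p + q" _ "p + q" p]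
    by (intro lattice_cong_preimage[OF lattice_cong_Tr]) simp_all
  ultimately have "lattice_cong (p + q) (\<Inter>{?L, ?R})" by (intro lattice_cong_Inter) auto
  moreover have "contracts (\<Inter>{?L, ?R}) g"
    if g: "g \<in> perms (p + q)" "join_irreducible g" "y \<in> C" "is_translate g y" for g y
  proof -
    obtain a b where gy: "g = translate a b y" using g(4) by (auto simp: is_translate_def)
    have y: "y \<in> perms (length y)" using join_irreducible_perms C g(3) by blast
    have "a + length y + b = p + q" using perms_length[OF g(1)] gy by simp
    then show ?thesis
      using Tr_restrict_values_translate[OF C g(3) y] g(1) lower_cover_translate[OF y] C g(3)
        lower_cover_perms[OF g(2)] perms_length[OF g(1)] gy by (simp add: contracts_def)
  qed
  ultimately have "Tr C (p + q) \<subseteq> \<Inter>{?L, ?R}" by (rule Tr_least)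
  then show "(?l x, ?l y) \<in> Tr C p" "(?r x, ?r y) \<in> Tr C q" using xy by blast+
qed

lemma wjoin_perm_prod_ident:
  assumes u: "u \<in> perms p" and v: "v \<in> perms q"
  shows "wjoin (p + q) (u \<otimes> ident q) (ident p \<otimes> v) = u \<otimes> v"
  using wjoin_perm_prod[OF u ident_perms ident_perms v]
    wjoin_absorb(2)[OF ident_perms u ident_weak_le] wjoin_absorb(1)[OF ident_perms v ident_weak_le]
  by simp

lemma translational_Tr:
  assumes C: "\<forall>y\<in>C. join_irreducible y \<and> untranslated y"
  shows "translational (Tr C)"
  unfolding translational_def
proof (intro allI ballI)
  fix p q u u' v v'
  assume u: "u \<in> perms p" and u': "u' \<in> perms p" and v: "v \<in> perms q" and v': "v' \<in> perms q"
  show "(u \<otimes> v, u' \<otimes> v') \<in> Tr C (p + q) \<longleftrightarrow> (u, u') \<in> Tr C p \<and> (v, v') \<in> Tr C q"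
  proof
    assume "(u \<otimes> v, u' \<otimes> v') \<in> Tr C (p + q)"
    then show "(u, u') \<in> Tr C p \<and> (v, v') \<in> Tr C q"
      using Tr_restrict_values[OF C] restrict_values_perm_prod[OF u v] restrict_values_perm_prod[OF u' v']
      by metis
  next
    assume "(u, u') \<in> Tr C p \<and> (v, v') \<in> Tr C q"
    then have "(u \<otimes> ident q, u' \<otimes> ident q) \<in> Tr C (p + q)" "(ident p \<otimes> v, ident p \<otimes> v') \<in> Tr C (p + q)"
      using Tr_translate[of u u' C p 0 q] Tr_translate[of v v' C q p 0] by simp_all
    then have "(wjoin (p + q) (u \<otimes> ident q) (ident p \<otimes> v), wjoin (p + q) (u' \<otimes> ident q) (ident p \<otimes> v))
        \<in> Tr C (p + q)"
      "(wjoin (p + q) (ident p \<otimes> v) (u' \<otimes> ident q), wjoin (p + q) (ident p \<otimes> v') (u' \<otimes> ident q))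
        \<in> Tr C (p + q)"
      using lattice_cong_wjoin[OF lattice_cong_Tr] perm_prod_perms[OF ident_perms v]
        perm_prod_perms[OF u' ident_perms] by blast+
    then have "(u \<otimes> v, u' \<otimes> v) \<in> Tr C (p + q)" "(u' \<otimes> v, u' \<otimes> v') \<in> Tr C (p + q)"
      using wjoin_commute[OF perm_prod_perms[OF ident_perms v] perm_prod_perms[OF u' ident_perms]]
        wjoin_commute[OF perm_prod_perms[OF ident_perms v'] perm_prod_perms[OF u' ident_perms]]
      by (simp_all add: wjoin_perm_prod_ident u u' v v')
    then show "(u \<otimes> v, u' \<otimes> v') \<in> Tr C (p + q)" by (rule lattice_cong_trans[OF lattice_cong_Tr])
  qed
qed

lemma translational_contracts_translate_iff:
  assumes \<Theta>: "\<And>n. lattice_cong n (\<Theta> n)" and tr: "translational \<Theta>"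
    and y: "y \<in> perms k" and J: "join_irreducible y"
  shows "contracts (\<Theta> (a + k + b)) (translate a b y) \<longleftrightarrow> contracts (\<Theta> k) y"
proof -
  note split = tr[unfolded translational_def, rule_format]
  have y': "lower_cover y \<in> perms k" using lower_cover_perms[OF J] perms_length[OF y] by simp
  have "contracts (\<Theta> (a + k + b)) (translate a b y) \<longleftrightarrow>
      (translate a b y, translate a b (lower_cover y)) \<in> \<Theta> (a + k + b)"
    by (simp add: contracts_def lower_cover_translate[OF y J])
  also have "\<dots> \<longleftrightarrow> (ident a \<otimes> y, ident a \<otimes> lower_cover y) \<in> \<Theta> (a + k)"
    using split[OF perm_prod_perms[OF ident_perms y] perm_prod_perms[OF ident_perms y'] ident_perms ident_perms]
      lattice_cong_refl[OF \<Theta> ident_perms] by simp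
  also have "\<dots> \<longleftrightarrow> (y, lower_cover y) \<in> \<Theta> k"
    using split[OF ident_perms ident_perms y y'] lattice_cong_refl[OF \<Theta> ident_perms] by simp
  finally show ?thesis by (simp add: contracts_def)
qed

lemma translational_eq_Tr:
  assumes \<Theta>: "\<And>n. lattice_cong n (\<Theta> n)" and tr: "translational \<Theta>"
  defines "C \<equiv> {y. join_irreducible y \<and> untranslated y \<and> contracts (\<Theta> (length y)) y}"
  shows "\<Theta> n = Tr C n"
proof
  show "Tr C n \<subseteq> \<Theta> n"
  proof (rule Tr_least[OF \<Theta>])
    fix g y assume g: "g \<in> perms n" and "y \<in> C" "is_translate g y"
    then obtain a b where "g = translate a b y" "join_irreducible y" "contracts (\<Theta> (length y)) y"
      by (auto simp: is_translate_def C_def)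
    moreover have "n = a + length y + b" using perms_length[OF g] \<open>g = translate a b y\<close> by simp
    ultimately show "contracts (\<Theta> n) g"
      using translational_contracts_translate_iff[OF \<Theta> tr join_irreducible_perms] by simp
  qed
next
  show "\<Theta> n \<subseteq> Tr C n"
  proof (rule lattice_cong_subset_if_contracts[OF \<Theta> lattice_cong_Tr])
    fix g assume g: "g \<in> perms n" "join_irreducible g" "contracts (\<Theta> n) g"
    then obtain a b y where gy: "g = translate a b y" "join_irreducible y" "untranslated y"
      using join_irreducible_translate_of_untranslated by blast
    moreover have "n = a + length y + b" using perms_length[OF g(1)] gy(1) by simp
    ultimately have "y \<in> C"
      using g(3) translational_contracts_translate_iff[OF \<Theta> tr join_irreducible_perms] by (simp add: C_def)
    moreover have "is_translate g y" using gy(1) by (auto simp: is_translate_def)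
    ultimately show "contracts (Tr C n) g" using Tr_contracts g(1,2) by blast
  qed
qed

theorem proposition7p1:
  fixes \<Theta> :: "nat \<Rightarrow> (nat list \<times> nat list) set"
  assumes "\<And>n. lattice_cong n (\<Theta> n)"
  shows "translational \<Theta> \<longleftrightarrow>
    (\<exists>C. (\<forall>x\<in>C. join_irreducible x \<and> untranslated x) \<and> (\<forall>n. \<Theta> n = Tr C n))"
proof
  assume "translational \<Theta>"
  let ?C = "{y. join_irreducible y \<and> untranslated y \<and> contracts (\<Theta> (length y)) y}"
  have "\<forall>n. \<Theta> n = Tr ?C n" using translational_eq_Tr[OF assms \<open>translational \<Theta>\<close>] by blast
  moreover have "\<forall>x\<in>?C. join_irreducible x \<and> untranslated x" by blast
  ultimately show "\<exists>C. (\<forall>x\<in>C. join_irreducible x \<and> untranslated x) \<and> (\<forall>n. \<Theta> n = Tr C n)" by blast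
next
  assume "\<exists>C. (\<forall>x\<in>C. join_irreducible x \<and> untranslated x) \<and> (\<forall>n. \<Theta> n = Tr C n)"
  then obtain C where C: "\<forall>x\<in>C. join_irreducible x \<and> untranslated x" "\<forall>n. \<Theta> n = Tr C n" by blast
  then have "\<Theta> = Tr C" by (intro ext) simp
  then show "translational \<Theta>" using translational_Tr[OF C(1)] by simp
qed

end
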